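(* Suppose Assumptions 1 and 2 hold. Then with high probability, $$\big\|(\mathbf R-\mathbf R^\star)\mathbf U^\star(\boldsymbol\Lambda^\star)^{-1/2}\big\|_{2,\infty}\le C\sqrt{\frac{d\log T}{\gamma\lambda^\star_d}}\left[1+\left(\sqrt{\frac{\log n}{\gamma}}+\sqrt{\frac1T}\right)\|\mathbf R^\star\|_{2,\infty}\right].$$
   Context: Setup. Let $n,T$ be positive integers and $\mathbf Z^\star\in\mathbb R^{n\times T}$ a deterministic real matrix whose $i$-th row $\mathbf Z^\star_i\in\mathbb R^T$ is the $i$-th (true) time series. The observed data are $\mathbf Z=\mathbf Z^\star+\mathbf N$, where $\mathbf N\in\mathbb R^{n\times T}$ is random noise with rows $\mathbf N_1,\dots,\mathbf N_n$. Let $\mathbf M=\mathbf I-\frac1T\mathbf J\in\mathbb R^{T\times T}$ be the centering projection ($\mathbf J$ the all-ones matrix). Define the signal powers $\sigma^{\star2}_i=\frac1T\|\mathbf M\mathbf Z^\star_i\|^2$, assumed positive for all $i$, and their noisy versions $\hat\sigma_i^2=\frac1T\|\mathbf M\mathbf Z_i\|^2$. Let $\boldsymbol\Sigma^\star=\operatorname{diag}(\sigma^{\star2}_1,\dots,\sigma^{\star2}_n)$ and $\hat{\boldsymbol\Sigma}=\operatorname{diag}(\hat\sigma^2_1,\dots,\hat\sigma^2_n)$. The true and observed correlation matrices are $\mathbf R^\star=\frac1T(\boldsymbol\Sigma^\star)^{-1/2}\mathbf Z^\star\mathbf M\mathbf Z^{\star\top}(\boldsymbol\Sigma^\star)^{-1/2}$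 and $\mathbf R=\frac1T\hat{\boldsymbol\Sigma}^{-1/2}\mathbf Z\mathbf M\mathbf Z^{\top}\hat{\boldsymbol\Sigma}^{-1/2}$. $\mathbf R^\star$ is positive semidefinite; let $d=\operatorname{rank}\mathbf R^\star$, with nonzero eigenvalues $\lambda^\star_1\ge\dots\ge\lambda^\star_d>0$, $\boldsymbol\Lambda^\star=\operatorname{diag}(\lambda^\star_1,\dots,\lambda^\star_d)$, and $\mathbf U^\star\in\mathbb R^{n\times d}$ with orthonormal columns such that $\mathbf R^\star=\mathbf U^\star\boldsymbol\Lambda^\star\mathbf U^{\star\top}$; $\kappa=\lambda^\star_1/\lambda^\star_d$. Assumption 1: the rows $\mathbf N_1,\dots,\mathbf N_n$ are mean zero and independent, $n=O(T)$, and each $\mathbf N_i$ is a $\nu_i$-subgaussian random vector (for every fixed unit vector $\mathbf u\in\mathbb R^T$, $\mathbf u^\top\mathbf N_i$ is $\nu_i$-subgaussian). Define $\gamma=\min_{i\in[n]}\sigma^{\star2}_i/\nu_i$. Assumption 2: $\lambda^\star_d$ is bounded away from zero, $\kappa=o(T)$, and $\kappa\log T/\gamma=o(1)$. Conventions: asymptotics are as $n,T\to\infty$; $C$ denotes a positive constant not depending on $n,T$; "with high probability" means with probability tending to one; $\|\mathbf B\|_{2,\infty}$ is the maximum Euclidean norm of the rows of $\mathbf B$. *)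

theory Defs
  imports "HOL-Probability.Probability" "HOL-Library.Landau_Symbols"
begin

text \<open>Matrices of varying size are represented as functions nat => nat => real,
  with dimensions passed explicitly; only entries inside the bounds matter.\<close>

definition mat_mul :: "nat \<Rightarrow> (nat \<Rightarrow> nat \<Rightarrow> real) \<Rightarrow> (nat \<Rightarrow> nat \<Rightarrow> real) \<Rightarrow> nat \<Rightarrow> nat \<Rightarrow> real" where
  "mat_mul m A B = (\<lambda>i j. \<Sum>l<m. A i l * B l j)"

definition centering :: "nat \<Rightarrow> nat \<Rightarrow> nat \<Rightarrow> real" where
  "centering T = (\<lambda>s t. (if s = t then 1 else 0) - 1 / real T)"

definition sig2 :: "nat \<Rightarrow> (nat \<Rightarrow> nat \<Rightarrow> real) \<Rightarrow> nat \<Rightarrow> real" where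
  "sig2 T Z i = (1 / real T) * (\<Sum>s<T. (\<Sum>t<T. centering T s t * Z i t)\<^sup>2)"

text \<open>Correlation matrix (1/T) Sigma^(-1/2) Z M Z^T Sigma^(-1/2), entrywise.\<close>
definition corr :: "nat \<Rightarrow> (nat \<Rightarrow> nat \<Rightarrow> real) \<Rightarrow> nat \<Rightarrow> nat \<Rightarrow> real" where
  "corr T Z = (\<lambda>i j. (1 / real T) * (\<Sum>s<T. \<Sum>t<T. Z i s * centering T s t * Z j t)
                       / (sqrt (sig2 T Z i) * sqrt (sig2 T Z j)))"

definition norm_2inf :: "nat \<Rightarrow> nat \<Rightarrow> (nat \<Rightarrow> nat \<Rightarrow> real) \<Rightarrow> real" where
  "norm_2inf n m B = Max (insert 0 ((\<lambda>i. sqrt (\<Sum>j<m. (B i j)\<^sup>2)) ` {..<n}))"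

definition subgaussian :: "'a measure \<Rightarrow> ('a \<Rightarrow> real) \<Rightarrow> real \<Rightarrow> bool" where
  "subgaussian M X \<nu> \<longleftrightarrow> X \<in> borel_measurable M \<and>
     (\<forall>s::real. integrable M (\<lambda>\<omega>. exp (s * X \<omega>)) \<and>
        (\<integral>\<omega>. exp (s * X \<omega>) \<partial>M) \<le> exp (\<nu> * s\<^sup>2 / 2))"

definition subgaussian_row :: "'a measure \<Rightarrow> nat \<Rightarrow> ('a \<Rightarrow> nat \<Rightarrow> real) \<Rightarrow> real \<Rightarrow> bool" where
  "subgaussian_row M T X \<nu> \<longleftrightarrow>
     (\<forall>u::nat \<Rightarrow> real. (\<Sum>t<T. (u t)\<^sup>2) = 1 \<longrightarrow>
        subgaussian M (\<lambda>\<omega>. \<Sum>t<T. u t * X \<omega> t) \<nu>)"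

end

(*
  Rstar and R are the Gram matrices of the unit vectors v_i = M z_i / |M z_i| and of their noisy
  versions. Hence the rows of (R - Rstar) U Lambda^(-1/2) can be bounded deterministically as soon
  as the centered noise e_i is small in a few directions only:
    |e_i|^2 <= eta |M z_i|^2   and   |<v_j, e_i>|, |<w_a, e_i>| <= theta |M z_i|,
  where w_a = sum_l U_la v_l / sqrt lambda_a are the left singular vectors. Moments of order
  p ~ 3 log n of the subgaussian noise and Markov's inequality make each of these n (1 + n + d)
  conditions fail with probability at most 2 n^(-3) when theta^2 ~ log n / (gamma T) and
  eta ~ log n / gamma, so a union bound suffices. Finally d lambda_d <= n <= d |Rstar|_(2,inf)^2, from
  the unit diagonal of Rstar, turns the deterministic bound into the stated rate.
*)
theory Submission
  imports Defs
begin

section \<open>Vectors indexed by an initial segment\<close>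

definition dot :: "nat \<Rightarrow> (nat \<Rightarrow> real) \<Rightarrow> (nat \<Rightarrow> real) \<Rightarrow> real" where
  "dot m x y = (\<Sum>t<m. x t * y t)"

definition unitize :: "nat \<Rightarrow> (nat \<Rightarrow> real) \<Rightarrow> nat \<Rightarrow> real" where
  "unitize m x = (\<lambda>t. x t / L2_set x {..<m})"

definition center :: "nat \<Rightarrow> (nat \<Rightarrow> real) \<Rightarrow> nat \<Rightarrow> real" where
  "center T z = (\<lambda>s. \<Sum>t<T. centering T s t * z t)"

lemma dot_commute: "dot m x y = dot m y x"
  unfolding dot_def by (simp add: mult.commute)

lemma dot_add_right: "dot m z (\<lambda>t. x t + y t) = dot m z x + dot m z y"
  unfolding dot_def by (simp add: algebra_simps sum.distrib)

lemma dot_add_left: "dot m (\<lambda>t. x t + y t) z = dot m x z + dot m y z"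
  using dot_add_right dot_commute by metis

lemma dot_diff_right: "dot m z (\<lambda>t. x t - y t) = dot m z x - dot m z y"
  unfolding dot_def by (simp add: algebra_simps sum_subtractf)

lemma dot_diff_left: "dot m (\<lambda>t. x t - y t) z = dot m x z - dot m y z"
  using dot_diff_right dot_commute by metis

lemma dot_divide_right: "dot m y (\<lambda>t. x t / c) = dot m y x / c"
  unfolding dot_def by (simp add: sum_divide_distrib)

lemma dot_divide_left: "dot m (\<lambda>t. x t / c) y = dot m x y / c"
  using dot_divide_right dot_commute by metis

lemma dot_lincomb_left: "dot m (\<lambda>t. \<Sum>l\<in>L. f l t * c l) y = (\<Sum>l\<in>L. c l * dot m (f l) y)"
  unfolding dot_def by (simp add: sum_distrib_right sum_distrib_left mult_ac) (rule sum.swap)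

lemma dot_self_nonneg: "0 \<le> dot m x x"
  unfolding dot_def by (simp add: sum_nonneg)

lemma dot_cong:
  "(\<And>t. t < m \<Longrightarrow> x t = x' t) \<Longrightarrow> (\<And>t. t < m \<Longrightarrow> y t = y' t) \<Longrightarrow> dot m x y = dot m x' y'"
  unfolding dot_def by (intro sum.cong) auto

lemma L2_set_sq_eq_dot: "(L2_set x {..<m})\<^sup>2 = dot m x x"
  unfolding L2_set_def dot_def by (simp add: sum_nonneg power2_eq_square)

lemma L2_set_eq_sqrt_dot: "L2_set x {..<m} = sqrt (dot m x x)"
  unfolding L2_set_def dot_def by (simp add: power2_eq_square)

lemma abs_dot_le: "\<bar>dot m x y\<bar> \<le> L2_set x {..<m} * L2_set y {..<m}"
proof -
  have "\<bar>dot m x y\<bar> \<le> (\<Sum>t<m. \<bar>x t\<bar> * \<bar>y t\<bar>)"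
    unfolding dot_def by (metis (no_types, lifting) abs_mult sum.cong sum_abs)
  also have "\<dots> \<le> L2_set x {..<m} * L2_set y {..<m}" by (rule L2_set_mult_ineq)
  finally show ?thesis .
qed

lemma dot_unitize_right: "dot m y (unitize m x) = dot m y x / L2_set x {..<m}"
  unfolding unitize_def by (rule dot_divide_right)

lemma dot_unitize_left: "dot m (unitize m x) y = dot m x y / L2_set x {..<m}"
  unfolding unitize_def by (rule dot_divide_left)

lemma dot_unitize_self:
  assumes "L2_set x {..<m} > 0" shows "dot m (unitize m x) (unitize m x) = 1"
proof -
  have "dot m (unitize m x) (unitize m x) = dot m x x / (L2_set x {..<m} * L2_set x {..<m})"
    by (simp add: dot_unitize_left dot_unitize_right)
  then show ?thesis using assms by (simp add: L2_set_sq_eq_dot[symmetric] power2_eq_square)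
qed

lemma dot_center_commute: "dot T x (center T y) = dot T (center T x) y"
proof -
  have "dot T x (center T y) = (\<Sum>s<T. \<Sum>t<T. x s * (centering T s t * y t))"
    unfolding dot_def center_def by (simp add: sum_distrib_left)
  also have "\<dots> = (\<Sum>t<T. \<Sum>s<T. x s * (centering T s t * y t))"
    by (rule sum.swap)
  also have "\<dots> = dot T (center T x) y"
    unfolding dot_def center_def sum_distrib_right
    by (intro sum.cong refl) (simp add: centering_def algebra_simps)
  finally show ?thesis .
qed

lemma sum_delta_mult: "(\<Sum>n<(T::nat). f n * (if t = n then 1 else (0::real))) = (if t < T then f t else 0)"
  by (simp add: if_distrib[of "\<lambda>x. _ * x"] cong: if_cong)

lemma center_center: assumes "s < T" shows "center T (center T x) s = center T x s"
proof -
  have idem: "(\<Sum>t<T. centering T s t * centering T t r) = centering T s r" if "r < T" for r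
    using assms that by (simp add: centering_def algebra_simps sum_subtractf sum.distrib
        sum_delta_mult if_distrib[of "\<lambda>x. x * _"] if_distrib[of "\<lambda>x. x / _"] cong: if_cong)
  have "center T (center T x) s = (\<Sum>r<T. (\<Sum>t<T. centering T s t * centering T t r) * x r)"
    unfolding center_def by (simp add: sum_distrib_left sum_distrib_right mult.assoc) (rule sum.swap)
  also have "\<dots> = center T x s" unfolding center_def by (intro sum.cong) (simp_all add: idem)
  finally show ?thesis .
qed

lemma center_add: "center T (\<lambda>t. x t + y t) = (\<lambda>s. center T x s + center T y s)"
  unfolding center_def by (simp add: algebra_simps sum.distrib)

lemma center_divide: "center T (\<lambda>t. x t / c) s = center T x s / c"
  unfolding center_def by (simp add: sum_divide_distrib)

lemma center_lincomb: "center T (\<lambda>t. \<Sum>l\<in>L. f l t * c l) s = (\<Sum>l\<in>L. center T (f l) s * c l)"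
  unfolding center_def by (simp add: sum_distrib_left sum_distrib_right mult_ac) (rule sum.swap)

lemma center_unitize_center:
  assumes "s < T" shows "center T (unitize T (center T z)) s = unitize T (center T z) s"
  unfolding unitize_def center_divide using center_center[OF assms] by simp

lemma dot_center_fixed:
  assumes "\<And>s. s < T \<Longrightarrow> center T u s = u s"
  shows "dot T u (center T z) = dot T u z"
  using assms by (simp add: dot_center_commute cong: dot_cong)

lemma dot_center_center: "dot T (center T x) (center T y) = dot T x (center T y)"
  by (metis center_center dot_center_commute dot_center_fixed)

lemma dot_center_self_le: "dot T (center T z) (center T z) \<le> dot T z z"
proof -
  have "dot T (center T z) (center T z) = (\<Sum>s<T. z s * z s) - (\<Sum>s<T. z s)\<^sup>2 / real T"
    unfolding dot_center_center unfolding dot_def center_def centering_def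
    by (simp add: algebra_simps sum_subtractf sum_distrib_left sum_distrib_right sum_divide_distrib
        power2_eq_square if_distrib[of "\<lambda>x. x * _"] cong: if_cong)
      (simp add: mult.assoc[symmetric] sum_delta_mult)
  also have "\<dots> \<le> dot T z z" unfolding dot_def by simp
  finally show ?thesis .
qed

lemma sig2_eq_dot: "sig2 T Z i = dot T (center T (Z i)) (center T (Z i)) / real T"
  unfolding sig2_def dot_def center_def by (simp add: power2_eq_square)

lemma corr_eq_dot_unitize:
  assumes "T > 0"
  shows "corr T Z i j = dot T (unitize T (center T (Z i))) (unitize T (center T (Z j)))"
proof -
  have cross: "(\<Sum>s<T. \<Sum>t<T. Z i s * centering T s t * Z j t) = dot T (center T (Z i)) (center T (Z j))"
    unfolding dot_center_center unfolding dot_def center_def by (simp add: sum_distrib_left mult.assoc)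
  have norm: "L2_set (center T (Z k)) {..<T} = sqrt (real T) * sqrt (sig2 T Z k)" for k
    unfolding sig2_eq_dot L2_set_eq_sqrt_dot using assms by (simp add: real_sqrt_divide)
  have "sqrt (real T) * sqrt (real T) = real T" by simp
  then show ?thesis unfolding corr_def cross dot_unitize_left dot_unitize_right norm
    by (simp add: field_simps)
qed

lemma sum_sq_orthonormal_combination:
  fixes U :: "nat \<Rightarrow> nat \<Rightarrow> real"
  assumes orth: "\<And>a b. a < d \<Longrightarrow> b < d \<Longrightarrow> (\<Sum>i<n. U i a * U i b) = (if a = b then 1 else 0)"
  shows "(\<Sum>j<n. (\<Sum>a<d. c a * U j a)\<^sup>2) = (\<Sum>a<d. (c a)\<^sup>2)"
proof -
  have "(\<Sum>j<n. (\<Sum>a<d. c a * U j a)\<^sup>2) = (\<Sum>a<d. \<Sum>b<d. c a * c b * (\<Sum>j<n. U j a * U j b))"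
    by (simp add: power2_eq_square sum_distrib_left sum_distrib_right mult_ac)
      (subst sum.swap, simp add: sum.swap[of _ "{..<n}" "{..<d}"])
  also have "\<dots> = (\<Sum>a<d. (c a)\<^sup>2)"
    by (simp add: orth power2_eq_square if_distrib[of "\<lambda>x. _ * x"] cong: if_cong)
  finally show ?thesis .
qed

lemma bessel_inequality:
  fixes U :: "nat \<Rightarrow> nat \<Rightarrow> real"
  assumes orth: "\<And>a b. a < d \<Longrightarrow> b < d \<Longrightarrow> (\<Sum>i<n. U i a * U i b) = (if a = b then 1 else 0)"
  shows "(\<Sum>a<d. (\<Sum>l<n. c l * U l a)\<^sup>2) \<le> (\<Sum>l<n. (c l)\<^sup>2)"
proof -
  define \<beta> where "\<beta> a = (\<Sum>l<n. c l * U l a)" for a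
  have proj: "(\<Sum>l<n. (\<Sum>a<d. \<beta> a * U l a)\<^sup>2) = (\<Sum>a<d. (\<beta> a)\<^sup>2)"
    by (rule sum_sq_orthonormal_combination[OF orth])
  have cross: "(\<Sum>l<n. c l * (\<Sum>a<d. \<beta> a * U l a)) = (\<Sum>a<d. (\<beta> a)\<^sup>2)"
    unfolding \<beta>_def power2_eq_square
    by (simp add: sum_distrib_left sum_distrib_right mult_ac) (rule sum.swap)
  have "0 \<le> (\<Sum>l<n. (c l - (\<Sum>a<d. \<beta> a * U l a))\<^sup>2)" by (simp add: sum_nonneg)
  also have "\<dots> = (\<Sum>l<n. (c l)\<^sup>2) - (\<Sum>a<d. (\<beta> a)\<^sup>2)"
    unfolding power2_diff using proj cross
    by (simp add: sum.distrib sum_subtractf sum_distrib_left[symmetric] mult.assoc)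
  finally show ?thesis unfolding \<beta>_def by simp
qed

lemma L2_set_abs_mono:
  assumes "\<And>i. i \<in> K \<Longrightarrow> \<bar>f i\<bar> \<le> g i"
  shows "L2_set f K \<le> L2_set g K"
proof -
  have "L2_set f K = L2_set (\<lambda>i. \<bar>f i\<bar>) K" unfolding L2_set_def by simp
  also have "\<dots> \<le> L2_set g K" by (rule L2_set_mono) (use assms in auto)
  finally show ?thesis .
qed

lemma L2_set_affine_le:
  assumes "0 \<le> c" "0 \<le> b" "finite K"
  shows "L2_set (\<lambda>i. c * \<bar>f i\<bar> + b) K \<le> c * L2_set f K + b * sqrt (card K)"
proof -
  have "L2_set (\<lambda>i. c * \<bar>f i\<bar> + b) K \<le> L2_set (\<lambda>i. c * \<bar>f i\<bar>) K + L2_set (\<lambda>i. b) K"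
    by (rule L2_set_triangle_ineq)
  also have "L2_set (\<lambda>i. c * \<bar>f i\<bar>) K = c * L2_set f K"
    using L2_set_right_distrib[OF assms(1), of "\<lambda>i. \<bar>f i\<bar>"] by (simp add: L2_set_def)
  also have "L2_set (\<lambda>i. b) K = b * sqrt (card K)" using assms by (simp add: L2_set_constant)
  finally show ?thesis .
qed

lemma norm_2inf_nonneg: "0 \<le> norm_2inf n m B"
  unfolding norm_2inf_def by (intro Max_ge order_trans[OF _ Max_ge]) auto

lemma L2_set_row_le_norm_2inf: "i < n \<Longrightarrow> L2_set (B i) {..<m} \<le> norm_2inf n m B"
  unfolding norm_2inf_def L2_set_def by (intro Max_ge) auto

lemma norm_2inf_le: "0 \<le> c \<Longrightarrow> (\<And>i. i < n \<Longrightarrow> L2_set (B i) {..<m} \<le> c) \<Longrightarrow> norm_2inf n m B \<le> c"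
  unfolding norm_2inf_def by (auto simp: L2_set_def)

section \<open>Gram matrices of unit vectors and their perturbation\<close>

text \<open>The vectors w_a = (\<Sum>l. U_la v_l) / sqrt \<lambda>_a are the left singular vectors of the matrix
  with columns v_l, whose Gram matrix is R* = U \<Lambda> U^T.\<close>
definition sing_vec ::
    "nat \<Rightarrow> nat \<Rightarrow> (nat \<Rightarrow> nat \<Rightarrow> real) \<Rightarrow> (nat \<Rightarrow> nat \<Rightarrow> real) \<Rightarrow> (nat \<Rightarrow> real) \<Rightarrow> nat \<Rightarrow> nat \<Rightarrow> real" where
  "sing_vec T n x U lam a = (\<lambda>t. \<Sum>l<n. unitize T (x l) t * (U l a / sqrt (lam a)))"

lemma center_sing_vec:
  assumes "s < T"
  shows "center T (sing_vec T n (\<lambda>i. center T (Z i)) U lam a) s = sing_vec T n (\<lambda>i. center T (Z i)) U lam a s"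
  unfolding sing_vec_def center_lincomb using center_unitize_center[OF assms] by simp

locale unit_gram =
  fixes T n d :: nat and x U :: "nat \<Rightarrow> nat \<Rightarrow> real" and lam :: "nat \<Rightarrow> real"
  assumes n_pos: "0 < n"
    and x_nonzero: "\<And>i. i < n \<Longrightarrow> L2_set (x i) {..<T} > 0"
    and lam_pos: "\<And>a. a < d \<Longrightarrow> lam a > 0"
    and lam_sorted: "\<And>a b. a \<le> b \<Longrightarrow> b < d \<Longrightarrow> lam b \<le> lam a"
    and U_orth: "\<And>a b. a < d \<Longrightarrow> b < d \<Longrightarrow> (\<Sum>i<n. U i a * U i b) = (if a = b then 1 else 0)"
    and gram_eig: "\<And>i j. i < n \<Longrightarrow> j < n \<Longrightarrow>
      dot T (unitize T (x i)) (unitize T (x j)) = (\<Sum>a<d. U i a * lam a * U j a)"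
begin

abbreviation v where "v i \<equiv> unitize T (x i)"
abbreviation w where "w a \<equiv> sing_vec T n x U lam a"

lemma v_unit: "i < n \<Longrightarrow> dot T (v i) (v i) = 1"
  using x_nonzero by (simp add: dot_unitize_self)

lemma d_pos: "0 < d"
  using gram_eig[OF n_pos n_pos] v_unit[OF n_pos] by (cases d) auto

lemma lam_min_pos: "0 < lam (d - 1)"
  using lam_pos d_pos by simp

lemma lam_max_div_min_ge_1: "1 \<le> lam 0 / lam (d - 1)"
  using lam_sorted[of 0 "d - 1"] d_pos lam_min_pos by simp

lemma dot_sing_vec_left: "dot T (w a) y = (\<Sum>l<n. U l a / sqrt (lam a) * dot T (v l) y)"
  unfolding sing_vec_def by (rule dot_lincomb_left)

lemma dot_sing_vec_unit:
  assumes a: "a < d" and i: "i < n"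
  shows "dot T (w a) (v i) = U i a * sqrt (lam a)"
proof -
  have "dot T (w a) (v i) = (\<Sum>l<n. (U l a / sqrt (lam a)) * (\<Sum>b<d. U l b * lam b * U i b))"
    unfolding dot_sing_vec_left by (intro sum.cong refl) (simp add: gram_eig i)
  also have "\<dots> = (\<Sum>b<d. (\<Sum>l<n. U l a * U l b) * (lam b * U i b / sqrt (lam a)))"
    by (simp add: sum_distrib_left sum_distrib_right mult_ac) (rule sum.swap)
  also have "\<dots> = lam a * U i a / sqrt (lam a)"
    using a by (simp add: U_orth if_distrib[of "\<lambda>x. x * _"] if_distrib[of "\<lambda>x. x / _"] cong: if_cong)
  also have "\<dots> = U i a * sqrt (lam a)"
    using lam_pos[OF a] by (simp add: field_simps real_sqrt_mult[symmetric] del: real_sqrt_mult)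
  finally show ?thesis .
qed

lemma sing_vec_unit:
  assumes a: "a < d" shows "dot T (w a) (w a) = 1"
proof -
  have "dot T (w a) (w a) = (\<Sum>l<n. U l a * U l a)"
    unfolding dot_sing_vec_left using lam_pos[OF a]
    by (intro sum.cong refl) (simp add: dot_commute[of T "v _"] dot_sing_vec_unit a)
  then show ?thesis using U_orth[OF a a] by simp
qed

lemma L2_set_dot_sing_vec_unit:
  assumes i: "i < n" shows "L2_set (\<lambda>a. dot T (w a) (v i)) {..<d} = 1"
proof -
  have "(\<Sum>a<d. (dot T (w a) (v i))\<^sup>2) = (\<Sum>a<d. U i a * lam a * U i a)"
  proof (intro sum.cong refl)
    fix a assume "a \<in> {..<d}"
    then show "(dot T (w a) (v i))\<^sup>2 = U i a * lam a * U i a"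
      using lam_pos[of a] by (simp add: dot_sing_vec_unit i power_mult_distrib power2_eq_square)
  qed
  then show ?thesis using gram_eig[OF i i] v_unit[OF i] by (simp add: L2_set_def)
qed

lemma L2_set_scaled_coeffs_le:
  "L2_set (\<lambda>a. \<Sum>l<n. c l * (U l a / sqrt (lam a))) {..<d} \<le> L2_set c {..<n} / sqrt (lam (d - 1))"
proof -
  define \<beta> where "\<beta> a = (\<Sum>l<n. c l * U l a)" for a
  have "(\<Sum>a<d. (\<Sum>l<n. c l * (U l a / sqrt (lam a)))\<^sup>2) = (\<Sum>a<d. (\<beta> a)\<^sup>2 / lam a)"
    unfolding \<beta>_def using less_imp_le[OF lam_pos]
    by (intro sum.cong refl) (simp add: power_divide sum_divide_distrib[symmetric])
  also have "\<dots> \<le> (\<Sum>a<d. (\<beta> a)\<^sup>2 / lam (d - 1))"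
  proof (intro sum_mono divide_left_mono)
    fix a assume "a \<in> {..<d}"
    then show "lam (d - 1) \<le> lam a" by (intro lam_sorted) auto
  qed (use lam_min_pos lam_pos in auto)
  also have "\<dots> \<le> (\<Sum>l<n. (c l)\<^sup>2) / lam (d - 1)"
    unfolding \<beta>_def sum_divide_distrib[symmetric] using lam_min_pos
    by (intro divide_right_mono bessel_inequality U_orth) auto
  finally show ?thesis
    unfolding L2_set_def by (simp add: real_sqrt_divide[symmetric] real_sqrt_le_mono)
qed

lemma trace_eq: "(\<Sum>a<d. lam a) = real n"
proof -
  have "real n = (\<Sum>i<n. dot T (v i) (v i))" using v_unit by simp
  also have "\<dots> = (\<Sum>i<n. \<Sum>a<d. lam a * (U i a * U i a))"
    by (intro sum.cong refl) (simp add: gram_eig mult_ac)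
  also have "\<dots> = (\<Sum>a<d. lam a * (\<Sum>i<n. U i a * U i a))"
    by (subst sum.swap) (simp add: sum_distrib_left)
  finally show ?thesis using U_orth by simp
qed

lemma dim_mult_lam_min_le: "real d * lam (d - 1) \<le> real n"
proof -
  have "(\<Sum>a<d. lam (d - 1)) \<le> (\<Sum>a<d. lam a)" by (intro sum_mono lam_sorted) auto
  then show ?thesis using trace_eq by simp
qed

text \<open>The diagonal entry 1 of row i is, by Cauchy--Schwarz in the eigen-coordinates, at most the
  norm of that row times the norm of row i of U; summing the squares over i gives the bound.\<close>
lemma dim_le_dim_mult_norm_2inf_sq:
  "real n \<le> real d * (norm_2inf n n (\<lambda>i j. dot T (v i) (v j)))\<^sup>2"
proof -
  define \<rho> where "\<rho> = norm_2inf n n (\<lambda>i j. dot T (v i) (v j))"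
  have row: "1 \<le> (\<Sum>a<d. (U i a)\<^sup>2) * \<rho>\<^sup>2" if i: "i < n" for i
  proof -
    define c where "c a = U i a * lam a" for a
    have "(\<Sum>j<n. (dot T (v i) (v j))\<^sup>2) = (\<Sum>j<n. (\<Sum>a<d. c a * U j a)\<^sup>2)"
      unfolding c_def by (intro sum.cong refl) (simp add: gram_eig i)
    also have "\<dots> = (\<Sum>a<d. (c a)\<^sup>2)" by (rule sum_sq_orthonormal_combination[OF U_orth])
    finally have row_norm: "L2_set c {..<d} = L2_set (\<lambda>j. dot T (v i) (v j)) {..<n}"
      unfolding L2_set_def by simp
    have "1 = (\<Sum>a<d. U i a * c a)" using v_unit[OF i] gram_eig[OF i i] by (simp add: c_def mult_ac)
    also have "\<dots> \<le> L2_set (U i) {..<d} * L2_set c {..<d}"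
      using abs_dot_le[of d "U i" c] by (simp add: dot_def)
    also have "\<dots> \<le> L2_set (U i) {..<d} * \<rho>"
      unfolding row_norm \<rho>_def by (intro mult_left_mono L2_set_row_le_norm_2inf i L2_set_nonneg)
    finally have "1\<^sup>2 \<le> (L2_set (U i) {..<d} * \<rho>)\<^sup>2" by (intro power_mono) auto
    then show ?thesis by (simp add: power_mult_distrib L2_set_def sum_nonneg)
  qed
  have "real n \<le> (\<Sum>i<n. (\<Sum>a<d. (U i a)\<^sup>2) * \<rho>\<^sup>2)"
    using sum_mono[of "{..<n}" "\<lambda>_. 1", OF row] by simp
  also have "\<dots> = (\<Sum>a<d. \<Sum>i<n. U i a * U i a) * \<rho>\<^sup>2"
    by (simp add: sum_distrib_right power2_eq_square) (rule sum.swap)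
  also have "\<dots> = real d * \<rho>\<^sup>2" using U_orth by simp
  finally show ?thesis unfolding \<rho>_def .
qed

end

locale gram_perturbation = unit_gram +
  fixes e :: "nat \<Rightarrow> nat \<Rightarrow> real" and \<theta> \<eta> :: real
  assumes noise_norm: "\<And>i. i < n \<Longrightarrow> dot T (e i) (e i) \<le> \<eta> * (L2_set (x i) {..<T})\<^sup>2"
    and noise_along_v: "\<And>i j. i < n \<Longrightarrow> j < n \<Longrightarrow> \<bar>dot T (v j) (e i)\<bar> \<le> \<theta> * L2_set (x i) {..<T}"
    and noise_along_w: "\<And>i a. i < n \<Longrightarrow> a < d \<Longrightarrow> \<bar>dot T (w a) (e i)\<bar> \<le> \<theta> * L2_set (x i) {..<T}"
    and noise_small: "2 * \<theta> + \<eta> \<le> 1/2"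
    and \<theta>_nonneg: "0 \<le> \<theta>" and \<eta>_nonneg: "0 \<le> \<eta>"
begin

abbreviation s where "s i \<equiv> L2_set (x i) {..<T}"
abbreviation xh where "xh i \<equiv> (\<lambda>t. x i t + e i t)"
abbreviation sh where "sh i \<equiv> L2_set (xh i) {..<T}"
abbreviation vh where "vh i \<equiv> unitize T (xh i)"

lemma perturbed_norm_bounds:
  assumes i: "i < n"
  shows "s i / 2 \<le> sh i" and "\<bar>sh i - s i\<bar> \<le> (2 * \<theta> + \<eta>) * s i"
proof -
  have sp: "s i > 0" using x_nonzero[OF i] .
  have xe: "\<bar>dot T (x i) (e i)\<bar> \<le> \<theta> * (s i)\<^sup>2"
  proof -
    have "\<bar>dot T (x i) (e i)\<bar> = s i * \<bar>dot T (v i) (e i)\<bar>"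
      using sp by (simp add: dot_unitize_left abs_mult)
    also have "\<dots> \<le> s i * (\<theta> * s i)" using noise_along_v[OF i i] sp by (intro mult_left_mono) auto
    finally show ?thesis by (simp add: power2_eq_square mult_ac)
  qed
  have "(sh i)\<^sup>2 = (s i)\<^sup>2 + 2 * dot T (x i) (e i) + dot T (e i) (e i)"
    unfolding L2_set_sq_eq_dot dot_add_left dot_add_right using dot_commute[of T "x i" "e i"] by simp
  then have sq_diff: "\<bar>(sh i)\<^sup>2 - (s i)\<^sup>2\<bar> \<le> (2 * \<theta> + \<eta>) * (s i)\<^sup>2"
    using xe dot_self_nonneg[of T "e i"] noise_norm[OF i] by (simp add: algebra_simps abs_le_iff)
  have "(2 * \<theta> + \<eta>) * (s i)\<^sup>2 \<le> 1/2 * (s i)\<^sup>2" using noise_small by (intro mult_right_mono) auto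
  then have "(s i / 2)\<^sup>2 \<le> (sh i)\<^sup>2" using sq_diff by (simp add: power_divide abs_le_iff)
  then show "s i / 2 \<le> sh i" using L2_set_nonneg by (rule power2_le_imp_le)
  have "\<bar>sh i - s i\<bar> * s i \<le> \<bar>sh i - s i\<bar> * (sh i + s i)"
    using L2_set_nonneg[of "xh i"] by (intro mult_left_mono) auto
  also have "\<dots> = \<bar>(sh i - s i) * (sh i + s i)\<bar>"
    using L2_set_nonneg[of "xh i"] sp by (simp add: abs_mult)
  also have "\<dots> = \<bar>(sh i)\<^sup>2 - (s i)\<^sup>2\<bar>" by (simp add: power2_eq_square algebra_simps)
  also have "\<dots> \<le> (2 * \<theta> + \<eta>) * s i * s i" using sq_diff by (simp add: power2_eq_square)
  finally show "\<bar>sh i - s i\<bar> \<le> (2 * \<theta> + \<eta>) * s i" using sp by simp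
qed

lemma perturbed_norm_pos: "i < n \<Longrightarrow> sh i > 0"
  using perturbed_norm_bounds(1)[of i] x_nonzero[of i] by linarith

lemma vh_unit: "i < n \<Longrightarrow> dot T (vh i) (vh i) = 1"
  using perturbed_norm_pos by (simp add: dot_unitize_self)

lemma dot_perturbed_unit_diff:
  assumes i: "i < n" and ue: "\<bar>dot T u (e i)\<bar> \<le> \<theta> * s i"
  shows "\<bar>dot T u (vh i) - dot T u (v i)\<bar> \<le> \<bar>dot T u (v i)\<bar> * (2 * (2 * \<theta> + \<eta>)) + 2 * \<theta>"
proof -
  have sp: "s i > 0" using x_nonzero[OF i] .
  have shp: "sh i > 0" using perturbed_norm_pos[OF i] .
  have ratio: "s i / sh i \<le> 2" using perturbed_norm_bounds(1)[OF i] shp by (simp add: field_simps)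
  define q where "q = dot T u (v i)"
  have "dot T u (vh i) = (s i * q + dot T u (e i)) / sh i"
    unfolding q_def using sp by (simp add: dot_unitize_right dot_add_right)
  then have split: "dot T u (vh i) - q = q * ((s i - sh i) / sh i) + dot T u (e i) / sh i"
    unfolding q_def using shp by (simp add: field_simps)
  have "\<bar>(s i - sh i) / sh i\<bar> \<le> (2 * \<theta> + \<eta>) * s i / sh i"
    using perturbed_norm_bounds(2)[OF i] shp by (simp add: abs_minus_commute divide_right_mono)
  also have "\<dots> = (2 * \<theta> + \<eta>) * (s i / sh i)" by simp
  also have "\<dots> \<le> (2 * \<theta> + \<eta>) * 2"
    using ratio \<theta>_nonneg \<eta>_nonneg by (intro mult_left_mono) auto
  finally have first: "\<bar>q * ((s i - sh i) / sh i)\<bar> \<le> \<bar>q\<bar> * (2 * (2 * \<theta> + \<eta>))"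
    unfolding abs_mult by (intro mult_left_mono) auto
  have "\<bar>dot T u (e i) / sh i\<bar> \<le> \<theta> * s i / sh i" using ue shp by (simp add: divide_right_mono)
  also have "\<dots> = \<theta> * (s i / sh i)" by simp
  also have "\<dots> \<le> \<theta> * 2" using ratio \<theta>_nonneg by (intro mult_left_mono) auto
  finally have second: "\<bar>dot T u (e i) / sh i\<bar> \<le> 2 * \<theta>" by simp
  show ?thesis unfolding split q_def[symmetric] using first second by linarith
qed

lemma unit_perturbation_sq_le:
  assumes i: "i < n"
  shows "dot T (\<lambda>t. vh i t - v i t) (\<lambda>t. vh i t - v i t) \<le> 4 * (3 * \<theta> + \<eta>)"
proof -
  have "dot T (\<lambda>t. vh i t - v i t) (\<lambda>t. vh i t - v i t) = 2 - 2 * dot T (v i) (vh i)"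
    unfolding dot_diff_left dot_diff_right using dot_commute[of T "v i" "vh i"] v_unit[OF i] vh_unit[OF i]
    by simp
  then show ?thesis
    using dot_perturbed_unit_diff[OF i noise_along_v[OF i i]] v_unit[OF i] by (simp add: abs_le_iff)
qed

lemma abs_dot_unit_perturbations_le:
  assumes i: "i < n" and l: "l < n"
  shows "\<bar>dot T (\<lambda>t. vh i t - v i t) (\<lambda>t. vh l t - v l t)\<bar> \<le> 4 * (3 * \<theta> + \<eta>)"
proof -
  have "\<bar>dot T (\<lambda>t. vh i t - v i t) (\<lambda>t. vh l t - v l t)\<bar>
     \<le> L2_set (\<lambda>t. vh i t - v i t) {..<T} * L2_set (\<lambda>t. vh l t - v l t) {..<T}" by (rule abs_dot_le)
  also have "\<dots> \<le> sqrt (4 * (3 * \<theta> + \<eta>)) * sqrt (4 * (3 * \<theta> + \<eta>))"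
    unfolding L2_set_eq_sqrt_dot
    using \<theta>_nonneg \<eta>_nonneg dot_self_nonneg
    by (intro mult_mono real_sqrt_le_mono unit_perturbation_sq_le i l) auto
  also have "\<dots> = 4 * (3 * \<theta> + \<eta>)" using \<theta>_nonneg \<eta>_nonneg by simp
  finally show ?thesis .
qed

text \<open>Writing \<delta>_i = vh i - v i, the entry of R - R* splits as
  \<langle>\<delta>_i, v_l\<rangle> + \<langle>v_i, \<delta>_l\<rangle> + \<langle>\<delta>_i, \<delta>_l\<rangle>. After multiplication by U \<Lambda>^(-1/2) the first term
  becomes \<langle>w_a, \<delta>_i\<rangle>, small in every direction w_a; the other two are bounded entrywise and
  then by Bessel's inequality.\<close>
lemma row_bound:
  assumes i: "i < n"
  shows "L2_set (\<lambda>a. \<Sum>l<n. (dot T (vh i) (vh l) - dot T (v i) (v l)) * (U l a / sqrt (lam a))) {..<d}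
    \<le> 2 * (2 * \<theta> + \<eta>) + 2 * \<theta> * sqrt (real d)
       + (2 * (2 * \<theta> + \<eta>) * L2_set (\<lambda>l. dot T (v i) (v l)) {..<n} + 2 * \<theta> * sqrt (real n)
          + 4 * (3 * \<theta> + \<eta>) * sqrt (real n)) / sqrt (lam (d - 1))"
proof -
  define c where "c = 2 * (2 * \<theta> + \<eta>)"
  have c0: "0 \<le> c" unfolding c_def using \<theta>_nonneg \<eta>_nonneg by simp
  define \<delta> where "\<delta> l = (\<lambda>t. vh l t - v l t)" for l
  define Y where "Y l a = U l a / sqrt (lam a)" for l a
  define g where "g l = dot T (v i) (vh l) - dot T (v i) (v l)" for l
  define h where "h l = dot T (\<delta> i) (\<delta> l)" for l
  define f1 where "f1 a = dot T (w a) (vh i) - dot T (w a) (v i)" for a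
  define f2 where "f2 a = (\<Sum>l<n. g l * Y l a)" for a
  define f3 where "f3 a = (\<Sum>l<n. h l * Y l a)" for a
  have "f1 a = (\<Sum>l<n. dot T (\<delta> i) (v l) * Y l a)" for a
  proof -
    have "f1 a = dot T (w a) (\<delta> i)" unfolding f1_def \<delta>_def dot_diff_right ..
    also have "\<dots> = (\<Sum>l<n. U l a / sqrt (lam a) * dot T (v l) (\<delta> i))" by (rule dot_sing_vec_left)
    finally show ?thesis unfolding Y_def by (simp add: dot_commute mult.commute)
  qed
  moreover have "dot T (vh i) (vh l) - dot T (v i) (v l) = dot T (\<delta> i) (v l) + g l + h l" for l
    unfolding \<delta>_def g_def h_def dot_diff_left dot_diff_right
    using dot_commute[of T "v i" "vh l"] dot_commute[of T "vh i" "v l"] by simp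
  ultimately have split: "(\<Sum>l<n. (dot T (vh i) (vh l) - dot T (v i) (v l)) * (U l a / sqrt (lam a)))
      = f1 a + f2 a + f3 a" for a
    unfolding f2_def f3_def Y_def by (simp add: sum.distrib algebra_simps)
  have "L2_set f1 {..<d} \<le> L2_set (\<lambda>a. c * \<bar>dot T (w a) (v i)\<bar> + 2 * \<theta>) {..<d}"
    unfolding f1_def c_def using dot_perturbed_unit_diff[OF i noise_along_w[OF i]]
    by (intro L2_set_abs_mono) (auto simp: mult.commute)
  also have "\<dots> \<le> c * L2_set (\<lambda>a. dot T (w a) (v i)) {..<d} + 2 * \<theta> * sqrt (card {..<d})"
    using c0 \<theta>_nonneg by (intro L2_set_affine_le) auto
  finally have L2f1: "L2_set f1 {..<d} \<le> c + 2 * \<theta> * sqrt (real d)"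
    using L2_set_dot_sing_vec_unit[OF i] by simp
  have "L2_set g {..<n} \<le> L2_set (\<lambda>l. c * \<bar>dot T (v i) (v l)\<bar> + 2 * \<theta>) {..<n}"
    unfolding g_def c_def using dot_perturbed_unit_diff[OF _ noise_along_v[OF _ i]]
    by (intro L2_set_abs_mono) (auto simp: mult.commute)
  also have "\<dots> \<le> c * L2_set (\<lambda>l. dot T (v i) (v l)) {..<n} + 2 * \<theta> * sqrt (card {..<n})"
    using c0 \<theta>_nonneg by (intro L2_set_affine_le) auto
  finally have L2g: "L2_set g {..<n} \<le> c * L2_set (\<lambda>l. dot T (v i) (v l)) {..<n} + 2 * \<theta> * sqrt (real n)"
    by simp
  have "L2_set h {..<n} \<le> L2_set (\<lambda>l. 4 * (3 * \<theta> + \<eta>)) {..<n}"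
    unfolding h_def \<delta>_def using abs_dot_unit_perturbations_le[OF i] by (intro L2_set_abs_mono) auto
  then have L2h: "L2_set h {..<n} \<le> 4 * (3 * \<theta> + \<eta>) * sqrt (real n)"
    using \<theta>_nonneg \<eta>_nonneg by (simp add: L2_set_constant mult.commute)
  have "L2_set f2 {..<d} + L2_set f3 {..<d} \<le> (L2_set g {..<n} + L2_set h {..<n}) / sqrt (lam (d - 1))"
    using L2_set_scaled_coeffs_le[of g] L2_set_scaled_coeffs_le[of h]
    unfolding f2_def f3_def Y_def by (simp add: add_divide_distrib)
  also have "\<dots> \<le> (c * L2_set (\<lambda>l. dot T (v i) (v l)) {..<n} + 2 * \<theta> * sqrt (real n)
                    + 4 * (3 * \<theta> + \<eta>) * sqrt (real n)) / sqrt (lam (d - 1))"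
    using L2g L2h lam_min_pos by (intro divide_right_mono) auto
  finally have L2f23: "L2_set f2 {..<d} + L2_set f3 {..<d} \<le> \<dots>" .
  have "L2_set (\<lambda>a. f1 a + f2 a + f3 a) {..<d} \<le> L2_set f1 {..<d} + L2_set f2 {..<d} + L2_set f3 {..<d}"
    using L2_set_triangle_ineq[of "\<lambda>a. f1 a + f2 a" f3 "{..<d}"] L2_set_triangle_ineq[of f1 f2 "{..<d}"]
    by linarith
  then show ?thesis unfolding split using L2f1 L2f23 unfolding c_def by linarith
qed

end

lemma le_sqrt_mult_of_sq_le:
  fixes a b c :: real
  assumes "0 \<le> b" "0 \<le> c" "a\<^sup>2 \<le> c * b\<^sup>2"
  shows "a \<le> sqrt c * b"
proof -
  have "a \<le> sqrt (a\<^sup>2)" by simp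
  also have "\<dots> \<le> sqrt (c * b\<^sup>2)" using assms by (intro real_sqrt_le_mono)
  also have "\<dots> = sqrt c * b" using assms by (simp add: real_sqrt_mult)
  finally show ?thesis .
qed

text \<open>The parameters stand for L = ln T, l = ln n, g = \<gamma>, \<rho> = (2,\<infinity>)-norm of R* and the
  deviation level K \<le> c1 ln n; the target rate is A + P + Q.\<close>
locale rate_calibration =
  fixes n d lam g T L l K c1 \<rho> :: real
  assumes d_ge_1: "1 \<le> d" and lam_pos: "0 < lam" and g_pos: "0 < g" and T_pos: "0 < T"
    and L_nonneg: "0 \<le> L" and l_nonneg: "0 \<le> l" and K_nonneg: "0 \<le> K" and c1_nonneg: "0 \<le> c1"
    and K_le: "K \<le> c1 * l" and l_le: "l \<le> 2 * L"
    and dim_lam_le: "d * lam \<le> n" and n_le_dim_rho: "n \<le> d * \<rho>\<^sup>2" and \<rho>_nonneg: "0 \<le> \<rho>"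
begin

definition "\<theta> = sqrt (K / (g * T))"
definition "\<eta> = K / g"
definition "A = sqrt (d * L / (g * lam))"
definition "P = A * sqrt (l / g) * \<rho>"
definition "Q = A * sqrt (1 / T) * \<rho>"

lemma A_nonneg: "0 \<le> A" unfolding A_def using d_ge_1 L_nonneg g_pos lam_pos by simp
lemma P_nonneg: "0 \<le> P" unfolding P_def using A_nonneg l_nonneg g_pos \<rho>_nonneg by simp
lemma Q_nonneg: "0 \<le> Q" unfolding Q_def using A_nonneg T_pos \<rho>_nonneg by simp

lemma \<theta>_mult_le:
  assumes X: "X\<^sup>2 \<le> d * \<rho>\<^sup>2 / lam"
  shows "\<theta> * X \<le> sqrt (2 * c1) * Q"
proof (rule le_sqrt_mult_of_sq_le)
  have "K \<le> 2 * c1 * L" using K_le mult_left_mono[OF l_le c1_nonneg] by linarith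
  then have "K * X\<^sup>2 / (g * T) \<le> (2 * c1 * L) * (d * \<rho>\<^sup>2 / lam) / (g * T)"
    using K_nonneg X g_pos T_pos L_nonneg c1_nonneg by (intro divide_right_mono mult_mono) auto
  then have "(\<theta> * X)\<^sup>2 \<le> (2 * c1 * L) * (d * \<rho>\<^sup>2 / lam) / (g * T)"
    unfolding \<theta>_def using K_nonneg g_pos T_pos by (simp add: power_mult_distrib)
  also have "\<dots> = 2 * c1 * Q\<^sup>2"
    unfolding Q_def A_def using d_ge_1 L_nonneg g_pos lam_pos T_pos
    by (simp add: power_mult_distrib field_simps)
  finally show "(\<theta> * X)\<^sup>2 \<le> 2 * c1 * Q\<^sup>2" .
qed (use Q_nonneg c1_nonneg in auto)

lemma \<eta>_mult_le:
  assumes X: "X\<^sup>2 \<le> d * \<rho>\<^sup>2 / lam"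
  shows "\<eta> * X \<le> sqrt (2 * c1\<^sup>2) * P"
proof (rule le_sqrt_mult_of_sq_le)
  have "K\<^sup>2 \<le> (c1 * l)\<^sup>2" using K_nonneg K_le by (intro power_mono) auto
  also have "\<dots> \<le> c1\<^sup>2 * (2 * L * l)"
    using mult_left_mono[OF mult_right_mono[OF l_le l_nonneg], of "c1\<^sup>2"]
    by (simp add: power2_eq_square mult_ac)
  finally have "K\<^sup>2 * X\<^sup>2 / (g * g) \<le> (2 * c1\<^sup>2 * L * l) * (d * \<rho>\<^sup>2 / lam) / (g * g)"
    using X g_pos L_nonneg l_nonneg by (intro divide_right_mono mult_mono) (auto simp: mult_ac)
  then have "(\<eta> * X)\<^sup>2 \<le> (2 * c1\<^sup>2 * L * l) * (d * \<rho>\<^sup>2 / lam) / (g * g)"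
    unfolding \<eta>_def by (simp add: power_mult_distrib power_divide power2_eq_square mult_ac)
  also have "\<dots> = 2 * c1\<^sup>2 * P\<^sup>2"
    unfolding P_def A_def using d_ge_1 L_nonneg g_pos lam_pos l_nonneg
    by (simp add: power_mult_distrib field_simps)
  finally show "(\<eta> * X)\<^sup>2 \<le> 2 * c1\<^sup>2 * P\<^sup>2" .
qed (use P_nonneg in auto)

lemma deterministic_bound_le_rate:
  assumes \<rho>i: "0 \<le> \<rho>i" "\<rho>i \<le> \<rho>"
  shows "2 * (2 * \<theta> + \<eta>) + 2 * \<theta> * sqrt d
       + (2 * (2 * \<theta> + \<eta>) * \<rho>i + 2 * \<theta> * sqrt n + 4 * (3 * \<theta> + \<eta>) * sqrt n) / sqrt lam
     \<le> (40 * (c1 + 1)) * sqrt (d * L / (g * lam)) * (1 + (sqrt (l / g) + sqrt (1 / T)) * \<rho>)"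
proof -
  define a where "a = sqrt (2 * c1)"
  define b where "b = sqrt (2 * c1\<^sup>2)"
  have n_nonneg: "0 \<le> n" using dim_lam_le d_ge_1 lam_pos mult_nonneg_nonneg[of d lam] by linarith
  have "d * lam \<le> d * \<rho>\<^sup>2" using dim_lam_le n_le_dim_rho by linarith
  then have \<rho>_lam: "1 \<le> \<rho>\<^sup>2 / lam" using d_ge_1 lam_pos by simp
  have d_le: "t \<le> d * t" if "0 \<le> t" for t using mult_right_mono[OF d_ge_1 that] by simp
  have X1: "1\<^sup>2 \<le> d * \<rho>\<^sup>2 / lam" using d_le[of "\<rho>\<^sup>2 / lam"] \<rho>_lam by simp
  have Xd: "(sqrt d)\<^sup>2 \<le> d * \<rho>\<^sup>2 / lam" using d_ge_1 mult_left_mono[OF \<rho>_lam, of d] by simp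
  have X\<rho>: "(\<rho>i / sqrt lam)\<^sup>2 \<le> d * \<rho>\<^sup>2 / lam"
  proof -
    have "(\<rho>i / sqrt lam)\<^sup>2 \<le> \<rho>\<^sup>2 / lam"
      using \<rho>i lam_pos by (simp add: power_divide divide_right_mono power_mono)
    also have "\<dots> \<le> d * \<rho>\<^sup>2 / lam" using d_le[of "\<rho>\<^sup>2 / lam"] lam_pos by simp
    finally show ?thesis .
  qed
  have Xn: "(sqrt n / sqrt lam)\<^sup>2 \<le> d * \<rho>\<^sup>2 / lam"
    using n_nonneg lam_pos n_le_dim_rho by (simp add: power_divide divide_right_mono)
  note \<theta>_bounds = \<theta>_mult_le[OF X1, folded a_def] \<theta>_mult_le[OF Xd, folded a_def]
    \<theta>_mult_le[OF X\<rho>, folded a_def] \<theta>_mult_le[OF Xn, folded a_def]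
  note \<eta>_bounds = \<eta>_mult_le[OF X1, folded b_def] \<eta>_mult_le[OF X\<rho>, folded b_def]
    \<eta>_mult_le[OF Xn, folded b_def]
  have "2 * (2 * \<theta> + \<eta>) + 2 * \<theta> * sqrt d
       + (2 * (2 * \<theta> + \<eta>) * \<rho>i + 2 * \<theta> * sqrt n + 4 * (3 * \<theta> + \<eta>) * sqrt n) / sqrt lam
     = 4 * (\<theta> * 1) + 2 * (\<eta> * 1) + 2 * (\<theta> * sqrt d) + 4 * (\<theta> * (\<rho>i / sqrt lam))
       + 2 * (\<eta> * (\<rho>i / sqrt lam)) + 14 * (\<theta> * (sqrt n / sqrt lam)) + 4 * (\<eta> * (sqrt n / sqrt lam))"
    using lam_pos by (simp add: field_simps)
  also have "\<dots> \<le> 24 * (a * Q) + 8 * (b * P)" using \<theta>_bounds \<eta>_bounds by linarith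
  also have "\<dots> \<le> 24 * ((c1 + 1) * Q) + 8 * ((2 * c1) * P)"
  proof -
    have "a \<le> c1 + 1" unfolding a_def
      using c1_nonneg by (intro real_le_lsqrt) (auto simp: power2_eq_square algebra_simps)
    moreover have "b \<le> 2 * c1" unfolding b_def
      using c1_nonneg by (intro real_le_lsqrt) (auto simp: power2_eq_square)
    ultimately show ?thesis using P_nonneg Q_nonneg by (intro add_mono mult_left_mono mult_right_mono) auto
  qed
  also have "\<dots> \<le> (40 * (c1 + 1)) * (A + P + Q)"
    using P_nonneg Q_nonneg A_nonneg c1_nonneg by (simp add: algebra_simps)
  also have "\<dots> = (40 * (c1 + 1)) * sqrt (d * L / (g * lam)) * (1 + (sqrt (l / g) + sqrt (1 / T)) * \<rho>)"
    unfolding P_def Q_def A_def by (simp add: algebra_simps)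
  finally show ?thesis .
qed

end

section \<open>Subgaussian tails\<close>

lemma power_div_fact_le_exp:
  fixes y :: real assumes "0 \<le> y" shows "y ^ m / fact m \<le> exp y"
proof -
  have s: "(\<lambda>k. y ^ k / fact k) sums exp y"
    using exp_converges[of y] by (simp add: divide_inverse mult.commute)
  have "(\<Sum>k\<in>{m}. y ^ k / fact k) \<le> suminf (\<lambda>k. y ^ k / fact k)"
    by (rule sum_le_suminf) (use s assms in \<open>auto simp: sums_iff\<close>)
  then show ?thesis using s by (simp add: sums_iff)
qed

lemma even_power_le_fact_mult_exp:
  fixes y :: real shows "y ^ (2 * p) \<le> fact (2 * p) * (exp y + exp (- y))"
proof -
  have "\<bar>y\<bar> ^ (2 * p) / fact (2 * p) \<le> exp \<bar>y\<bar>" by (rule power_div_fact_le_exp) simp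
  moreover have "exp \<bar>y\<bar> \<le> exp y + exp (- y)" by (cases "y \<ge> 0") auto
  moreover have "\<bar>y\<bar> ^ (2 * p) = y ^ (2 * p)" by (simp add: power_mult power2_abs)
  ultimately have "y ^ (2 * p) / fact (2 * p) \<le> exp y + exp (- y)" by simp
  then show ?thesis by (simp add: divide_le_eq mult.commute)
qed

text \<open>Evaluate the moment generating function at \<plusminus>s with s^2 = 2p/\<nu>, then use (2p)! \<le> (2p)^(2p).\<close>
lemma subgaussian_even_moment:
  assumes M: "prob_space M" and sg: "subgaussian M X \<nu>" and \<nu>: "0 < \<nu>" and p: "0 < p"
  shows "integrable M (\<lambda>\<omega>. X \<omega> ^ (2 * p))"
    and "(\<integral>\<omega>. X \<omega> ^ (2 * p) \<partial>M) \<le> 2 * (2 * exp 1 * real p * \<nu>) ^ p"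
proof -
  interpret prob_space M by (rule M)
  have Xm: "X \<in> borel_measurable M" and ints: "\<And>s. integrable M (\<lambda>\<omega>. exp (s * X \<omega>))"
    and mgf: "\<And>s. (\<integral>\<omega>. exp (s * X \<omega>) \<partial>M) \<le> exp (\<nu> * s\<^sup>2 / 2)"
    using sg unfolding subgaussian_def by auto
  define s where "s = sqrt (2 * real p / \<nu>)"
  have s0: "0 < s" unfolding s_def using \<nu> p by simp
  have s2: "s\<^sup>2 = 2 * real p / \<nu>" unfolding s_def using \<nu> p by simp
  define B where "B \<omega> = fact (2 * p) * (exp (s * X \<omega>) + exp ((- s) * X \<omega>)) / s ^ (2 * p)" for \<omega>
  have intB: "integrable M B" unfolding B_def
    by (intro integrable_divide integrable_mult_right Bochner_Integration.integrable_add ints)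
  have le: "X \<omega> ^ (2 * p) \<le> B \<omega>" for \<omega>
    using even_power_le_fact_mult_exp[of "s * X \<omega>" p] s0
    unfolding B_def by (simp add: power_mult_distrib le_divide_eq mult.commute)
  have nonneg: "0 \<le> X \<omega> ^ (2 * p)" for \<omega> by (simp add: power_mult)
  show intX: "integrable M (\<lambda>\<omega>. X \<omega> ^ (2 * p))"
    by (rule Bochner_Integration.integrable_bound[OF intB]) (use Xm le nonneg order_trans[OF nonneg le] in auto)
  have "(\<integral>\<omega>. X \<omega> ^ (2 * p) \<partial>M) \<le> (\<integral>\<omega>. B \<omega> \<partial>M)"
    by (rule integral_mono[OF intX intB le])
  also have "\<dots> = fact (2 * p) * ((\<integral>\<omega>. exp (s * X \<omega>) \<partial>M) + (\<integral>\<omega>. exp ((- s) * X \<omega>) \<partial>M)) / s ^ (2 * p)"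
    unfolding B_def using ints[of s] ints[of "-s"] by (simp add: Bochner_Integration.integral_add)
  also have "\<dots> \<le> fact (2 * p) * (exp (\<nu> * s\<^sup>2 / 2) + exp (\<nu> * (- s)\<^sup>2 / 2)) / s ^ (2 * p)"
    using mgf[of s] mgf[of "-s"] s0 by (intro divide_right_mono mult_left_mono add_mono) auto
  also have "\<dots> = 2 * fact (2 * p) * exp (real p) / (2 * real p / \<nu>) ^ p"
  proof -
    have "\<nu> * s\<^sup>2 / 2 = real p" using s2 \<nu> by simp
    moreover have "s ^ (2 * p) = (2 * real p / \<nu>) ^ p" by (simp add: power_mult s2)
    ultimately show ?thesis by simp
  qed
  also have "\<dots> \<le> 2 * (2 * real p) ^ (2 * p) * exp (real p) / (2 * real p / \<nu>) ^ p"
  proof -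
    have "fact (2 * p) \<le> (2 * real p) ^ (2 * p)"
      using fact_le_power[of "2 * p"] by simp
    then show ?thesis using p \<nu> by (intro divide_right_mono mult_right_mono mult_left_mono) auto
  qed
  also have "\<dots> = 2 * (2 * exp 1 * real p * \<nu>) ^ p"
  proof -
    define a where "a = (2 * real p) ^ p"
    have a: "a > 0" "\<nu> ^ p > 0" unfolding a_def using p \<nu> by auto
    have "exp (real p) = exp 1 ^ p" using exp_of_nat_mult[of p 1] by simp
    moreover have "(2 * real p) ^ (2 * p) = a * a" unfolding a_def by (simp only: mult_2 power_add)
    moreover have "(2 * real p / \<nu>) ^ p = a / \<nu> ^ p" unfolding a_def by (rule power_divide)
    moreover have "2 * (a * a) * exp 1 ^ p / (a / \<nu> ^ p) = 2 * (a * exp 1 ^ p * \<nu> ^ p)"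
      using a by (simp add: field_simps)
    ultimately show ?thesis unfolding a_def by (simp add: power_mult_distrib mult_ac)
  qed
  finally show "(\<integral>\<omega>. X \<omega> ^ (2 * p) \<partial>M) \<le> 2 * (2 * exp 1 * real p * \<nu>) ^ p" .
qed

lemma convex_on_power_nonneg: "convex_on {0::real..} (\<lambda>x. x ^ p)"
proof (cases "even p")
  case True
  then show ?thesis by (rule convex_on_subset[OF convex_power_even]) auto
next
  case False
  then show ?thesis by (rule convex_power_odd)
qed

lemma power_sum_le_card_power_sum:
  fixes a :: "nat \<Rightarrow> real"
  assumes "0 < m" "\<And>t. t < m \<Longrightarrow> 0 \<le> a t"
  shows "(\<Sum>t<m. a t) ^ p \<le> real m ^ (p - 1) * (\<Sum>t<m. a t ^ p)"
proof (cases "p = 0")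
  case True then show ?thesis using assms by simp
next
  case False
  have "(\<Sum>t<m. (1 / real m) *\<^sub>R (real m * a t)) ^ p \<le> (\<Sum>t<m. (1 / real m) * (real m * a t) ^ p)"
    by (rule convex_on_sum[OF _ _ convex_on_power_nonneg]) (use assms in auto)
  moreover have "(\<Sum>t<m. (1 / real m) *\<^sub>R (real m * a t)) = (\<Sum>t<m. a t)" using assms by simp
  moreover have "(1 / real m) * (real m * a t) ^ p = real m ^ (p - 1) * a t ^ p" for t
  proof -
    have "real m ^ p = real m * real m ^ (p - 1)" using False by (metis power_eq_if)
    then show ?thesis using assms by (simp add: power_mult_distrib)
  qed
  ultimately show ?thesis by (simp add: sum_distrib_left)
qed

text \<open>Markov's inequality for the p-th power of the sum of squares, whose moment is controlled
  coordinatewise by the power mean inequality.\<close>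
lemma subgaussian_sum_sq_tail:
  assumes M: "prob_space M" and T: "0 < T" and sg: "\<And>t. t < T \<Longrightarrow> subgaussian M (X t) \<nu>"
    and \<nu>: "0 < \<nu>" and p: "0 < p"
  shows "measure M {\<omega> \<in> space M. 2 * exp 2 * real p * real T * \<nu> \<le> (\<Sum>t<T. (X t \<omega>)\<^sup>2)}
    \<le> 2 * exp (- real p)"
proof -
  interpret prob_space M by (rule M)
  define K where "K = 2 * exp 2 * real p * real T * \<nu>"
  have K0: "0 < K" unfolding K_def using p \<nu> T by simp
  define S where "S \<omega> = (\<Sum>t<T. (X t \<omega>)\<^sup>2)" for \<omega>
  have S0: "0 \<le> S \<omega>" for \<omega> unfolding S_def by (simp add: sum_nonneg)
  have Sm: "S \<in> borel_measurable M"
    unfolding S_def using sg unfolding subgaussian_def by (intro borel_measurable_sum borel_measurable_power) auto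
  note moment = subgaussian_even_moment[OF M sg \<nu> p]
  define B where "B \<omega> = real T ^ (p - 1) * (\<Sum>t<T. X t \<omega> ^ (2 * p))" for \<omega>
  have intB: "integrable M B" unfolding B_def using moment(1) by auto
  have le: "S \<omega> ^ p \<le> B \<omega>" for \<omega>
    using power_sum_le_card_power_sum[of T "\<lambda>t. (X t \<omega>)\<^sup>2" p] T
    unfolding S_def B_def by (simp add: power_mult)
  have intS: "integrable M (\<lambda>\<omega>. S \<omega> ^ p)"
    by (rule Bochner_Integration.integrable_bound[OF intB]) (use Sm le S0 order_trans[OF _ le] in auto)
  have "(\<integral>\<omega>. S \<omega> ^ p \<partial>M) \<le> (\<integral>\<omega>. B \<omega> \<partial>M)" by (rule integral_mono[OF intS intB le])
  also have "\<dots> = real T ^ (p - 1) * (\<Sum>t<T. (\<integral>\<omega>. X t \<omega> ^ (2 * p) \<partial>M))"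
    unfolding B_def using moment(1) by (simp add: Bochner_Integration.integral_sum)
  also have "\<dots> \<le> real T ^ (p - 1) * (\<Sum>t<T. 2 * (2 * exp 1 * real p * \<nu>) ^ p)"
    by (intro mult_left_mono sum_mono moment(2)) auto
  also have "\<dots> = 2 * (2 * exp 1 * real p * \<nu> * real T) ^ p"
    using power_minus_mult[OF p, of "real T"] by (simp add: power_mult_distrib mult_ac)
  finally have ES: "(\<integral>\<omega>. S \<omega> ^ p \<partial>M) \<le> 2 * (2 * exp 1 * real p * \<nu> * real T) ^ p" .
  have "K \<le> y \<longleftrightarrow> K ^ p \<le> y ^ p" if "0 \<le> y" for y :: real
    using K0 that p power_le_imp_le_base[of K "p - 1" y] power_mono[of K y p] by (cases p) auto
  then have "{\<omega> \<in> space M. K \<le> S \<omega>} = {\<omega> \<in> space M. K ^ p \<le> S \<omega> ^ p}"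
    using S0 by auto
  moreover have "measure M {\<omega> \<in> space M. K ^ p \<le> S \<omega> ^ p} \<le> (\<integral>\<omega>. S \<omega> ^ p \<partial>M) / K ^ p"
    by (rule integral_Markov_inequality_measure[OF intS, where A = "space M"]) (use K0 S0 in auto)
  ultimately have "measure M {\<omega> \<in> space M. K \<le> S \<omega>} \<le> (\<integral>\<omega>. S \<omega> ^ p \<partial>M) / K ^ p"
    by simp
  also have "\<dots> \<le> 2 * ((2 * exp 1 * real p * \<nu> * real T) / K) ^ p"
    using ES K0 by (simp add: power_divide divide_right_mono)
  also have "(2 * exp 1 * real p * \<nu> * real T) / K = exp (- 1)"
    unfolding K_def using p \<nu> T by (simp add: exp_minus field_simps power2_eq_square exp_add[symmetric])
  also have "2 * exp (- 1) ^ p = 2 * exp (- real p)" using exp_of_nat_mult[of p "-1::real"] by simp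
  finally show ?thesis unfolding K_def S_def .
qed

lemma subgaussian_sq_tail:
  assumes "prob_space M" "subgaussian M X \<nu>" "0 < \<nu>" "0 < p"
  shows "measure M {\<omega> \<in> space M. 2 * exp 2 * real p * \<nu> \<le> (X \<omega>)\<^sup>2} \<le> 2 * exp (- real p)"
  using subgaussian_sum_sq_tail[of M 1 "\<lambda>_. X" \<nu> p] assms by simp

lemma subgaussian_row_coord:
  assumes "subgaussian_row M T X \<nu>" "t < T"
  shows "subgaussian M (\<lambda>\<omega>. X \<omega> t) \<nu>"
proof -
  define u where "u s = (if s = t then 1 else 0 :: real)" for s
  have "(\<Sum>s<T. (u s)\<^sup>2) = 1" unfolding u_def using assms(2)
    by (simp add: if_distrib[of "\<lambda>x. x\<^sup>2"] cong: if_cong)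
  then have "subgaussian M (\<lambda>\<omega>. \<Sum>s<T. u s * X \<omega> s) \<nu>"
    using assms(1) unfolding subgaussian_row_def by blast
  moreover have "(\<Sum>s<T. u s * X \<omega> s) = X \<omega> t" for \<omega>
    unfolding u_def using assms(2) by (simp add: if_distrib[of "\<lambda>x. x * _"] cong: if_cong)
  ultimately show ?thesis by simp
qed

lemma noise_deviation_event:
  fixes N :: "'a \<Rightarrow> nat \<Rightarrow> nat \<Rightarrow> real" and V :: "(nat \<Rightarrow> real) set"
  assumes M: "prob_space M" and T: "0 < T" and p: "0 < p" and V: "finite V"
    and unit: "\<And>u. u \<in> V \<Longrightarrow> (\<Sum>t<T. (u t)\<^sup>2) = 1"
    and \<nu>_pos: "\<And>i. i < n \<Longrightarrow> 0 < \<nu> i"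
    and subg: "\<And>i. i < n \<Longrightarrow> subgaussian_row M T (\<lambda>\<omega> t. N \<omega> i t) (\<nu> i)"
  defines "K \<equiv> 2 * exp 2 * real p"
  defines "Bad \<equiv> {\<omega> \<in> space M. \<exists>i<n. K * real T * \<nu> i \<le> (\<Sum>t<T. (N \<omega> i t)\<^sup>2) \<or>
                                     (\<exists>u\<in>V. K * \<nu> i \<le> (\<Sum>t<T. u t * N \<omega> i t)\<^sup>2)}"
  shows "Bad \<in> sets M" and "measure M Bad \<le> 2 * exp (- real p) * (real n * (1 + real (card V)))"
proof -
  interpret prob_space M by (rule M)
  have sg_coord: "subgaussian M (\<lambda>\<omega>. N \<omega> i t) (\<nu> i)" if "i < n" "t < T" for i t
    using subgaussian_row_coord[OF subg] that .
  have sg_dir: "subgaussian M (\<lambda>\<omega>. \<Sum>t<T. u t * N \<omega> i t) (\<nu> i)" if "i < n" "u \<in> V" for i u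
    using subg[OF that(1)] unit[OF that(2)] unfolding subgaussian_row_def by blast
  define B1 where "B1 i = {\<omega> \<in> space M. K * real T * \<nu> i \<le> (\<Sum>t<T. (N \<omega> i t)\<^sup>2)}" for i
  define B2 where "B2 iu = {\<omega> \<in> space M. K * \<nu> (fst iu) \<le> (\<Sum>t<T. snd iu t * N \<omega> (fst iu) t)\<^sup>2}" for iu
  have Bad_eq: "Bad = (\<Union>i\<in>{..<n}. B1 i) \<union> (\<Union>iu\<in>{..<n} \<times> V. B2 iu)"
    unfolding Bad_def B1_def B2_def by auto
  have B1: "B1 i \<in> sets M" "measure M (B1 i) \<le> 2 * exp (- real p)" if "i < n" for i
  proof -
    have "(\<lambda>\<omega>. \<Sum>t<T. (N \<omega> i t)\<^sup>2) \<in> borel_measurable M"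
      using sg_coord[OF that] unfolding subgaussian_def by (intro borel_measurable_sum borel_measurable_power) auto
    then show "B1 i \<in> sets M" unfolding B1_def by measurable
    show "measure M (B1 i) \<le> 2 * exp (- real p)"
      unfolding B1_def K_def using subgaussian_sum_sq_tail[OF M T sg_coord[OF that] \<nu>_pos[OF that] p]
      by (simp add: mult_ac)
  qed
  have B2: "B2 iu \<in> sets M" "measure M (B2 iu) \<le> 2 * exp (- real p)" if "iu \<in> {..<n} \<times> V" for iu
  proof -
    have i: "fst iu < n" and u: "snd iu \<in> V" using that by auto
    have "(\<lambda>\<omega>. (\<Sum>t<T. snd iu t * N \<omega> (fst iu) t)\<^sup>2) \<in> borel_measurable M"
      using sg_dir[OF i u] unfolding subgaussian_def by (intro borel_measurable_power) auto
    then show "B2 iu \<in> sets M" unfolding B2_def by measurable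
    show "measure M (B2 iu) \<le> 2 * exp (- real p)"
      unfolding B2_def K_def using subgaussian_sq_tail[OF M sg_dir[OF i u] \<nu>_pos[OF i] p] by (simp add: mult_ac)
  qed
  show "Bad \<in> sets M" unfolding Bad_eq using B1 B2 V by (intro sets.Un sets.finite_UN) auto
  have "measure M Bad \<le> measure M (\<Union>i\<in>{..<n}. B1 i) + measure M (\<Union>iu\<in>{..<n} \<times> V. B2 iu)"
    unfolding Bad_eq using B1 B2 V by (intro measure_Un_le sets.finite_UN) auto
  also have "\<dots> \<le> (\<Sum>i<n. measure M (B1 i)) + (\<Sum>iu\<in>{..<n} \<times> V. measure M (B2 iu))"
    using B1 B2 V by (intro add_mono measure_UNION_le) auto
  also have "\<dots> \<le> real (card {..<n}) * (2 * exp (- real p)) + real (card ({..<n} \<times> V)) * (2 * exp (- real p))"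
    using B1 B2 by (intro add_mono sum_bounded_above) auto
  finally show "measure M Bad \<le> 2 * exp (- real p) * (real n * (1 + real (card V)))"
    by (simp add: card_cartesian_product algebra_simps)
qed

section \<open>Correlation matrices under small noise\<close>

lemma deviation_level_bounds:
  assumes n: "2 \<le> n"
  defines "p \<equiv> nat \<lceil>3 * ln (real n)\<rceil>"
  shows "0 < p" and "2 * exp 2 * real p \<le> 90 * ln (real n)" and "exp (- real p) \<le> 1 / real n ^ 3"
proof -
  have "ln 2 \<le> ln (real n)" using n by simp
  then have ln_n: "1 / 2 \<le> ln (real n)" using ln2_ge_two_thirds by linarith
  have p_ge: "3 * ln (real n) \<le> real p" unfolding p_def by linarith
  show "0 < p" using p_ge ln_n by simp
  have "exp (2::real) \<le> 3 * 3"
    using exp_le exp_add[of 1 "1::real"] mult_mono[OF exp_le exp_le] by simp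
  moreover have "real p \<le> 5 * ln (real n)" unfolding p_def using ln_n by linarith
  ultimately show "2 * exp 2 * real p \<le> 90 * ln (real n)"
    using mult_mono[of "exp 2" 9 "real p" "5 * ln (real n)"] by (simp add: mult.commute)
  have "exp (- real p) \<le> exp (- (3 * ln (real n)))" using p_ge by simp
  also have "\<dots> = 1 / real n ^ 3"
    using exp_of_nat_mult[of 3 "ln (real n)"] n by (simp add: exp_minus inverse_eq_divide)
  finally show "exp (- real p) \<le> 1 / real n ^ 3" .
qed

lemma failure_probability_le:
  assumes n: "2 \<le> n" and cl: "0 < cl" "real d * cl \<le> real n" and p: "exp (- real p) \<le> 1 / real n ^ 3"
  shows "2 * exp (- real p) * (real n * (1 + (real n + real d))) \<le> 2 * (2 + 1 / cl) / real n"
proof -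
  have nr: "real n \<ge> 2" using n by simp
  have "2 * exp (- real p) * (real n * (1 + (real n + real d)))
      \<le> 2 * (1 / real n ^ 3) * (real n * (1 + (real n + real n / cl)))"
    using p cl nr by (intro mult_mono mult_left_mono add_mono) (auto simp: field_simps)
  also have "\<dots> = 2 * (1 / (real n)\<^sup>2 + 1 / real n + 1 / (cl * real n))"
    using nr cl by (simp add: field_simps power2_eq_square power3_eq_cube)
  also have "\<dots> \<le> 2 * (2 + 1 / cl) / real n"
    using nr cl by (simp add: field_simps power2_eq_square)
  finally show ?thesis .
qed

lemma deviation_radii_small:
  fixes \<gamma> K :: real
  assumes "0 < \<gamma>" "1 \<le> T" "0 \<le> K" "K \<le> 90 * ln n" "ln n \<le> 2 * ln T" "ln T / \<gamma> \<le> 1 / 20000"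
  shows "2 * sqrt (K / (\<gamma> * T)) + K / \<gamma> \<le> 1 / 2"
proof -
  have "K / \<gamma> \<le> 180 * (ln T / \<gamma>)"
    using assms by (simp add: divide_right_mono)
  then have \<eta>: "K / \<gamma> \<le> 9 / 1000" using assms by linarith
  have "K / (\<gamma> * T) \<le> K / \<gamma>" using assms by (intro divide_left_mono) auto
  moreover have "(9::real) / 1000 \<le> (1 / 10)\<^sup>2" by (simp add: power2_eq_square)
  ultimately have "K / (\<gamma> * T) \<le> (1 / 10)\<^sup>2" using \<eta> by linarith
  then have "sqrt (K / (\<gamma> * T)) \<le> 1 / 10" by (intro real_le_lsqrt) auto
  then show ?thesis using \<eta> by linarith
qed

lemma L2_set_center_sq: "(L2_set (center T (Z i)) {..<T})\<^sup>2 = real T * sig2 T Z i"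
  unfolding L2_set_sq_eq_dot sig2_eq_dot by (cases "T = 0") (auto simp: dot_def)

lemma unit_gram_centered:
  assumes T: "0 < T" and n: "0 < n"
    and sig_pos: "\<And>i. i < n \<Longrightarrow> sig2 T Z i > 0"
    and lam_sorted: "\<And>a b. a \<le> b \<Longrightarrow> b < d \<Longrightarrow> lam b \<le> lam a"
    and lam_pos: "\<And>a. a < d \<Longrightarrow> lam a > 0"
    and U_orth: "\<And>a b. a < d \<Longrightarrow> b < d \<Longrightarrow> (\<Sum>i<n. U i a * U i b) = (if a = b then 1 else 0)"
    and R_eig: "\<And>i j. i < n \<Longrightarrow> j < n \<Longrightarrow> corr T Z i j = (\<Sum>a<d. U i a * lam a * U j a)"
  shows "unit_gram T n d (\<lambda>i. center T (Z i)) U lam"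
proof
  fix i assume i: "i < n"
  have "0 < (L2_set (center T (Z i)) {..<T})\<^sup>2"
    unfolding L2_set_center_sq using T sig_pos[OF i] by simp
  then show "0 < L2_set (center T (Z i)) {..<T}"
    using L2_set_nonneg[of "center T (Z i)" "{..<T}"] by (auto simp: less_le)
qed (use assms corr_eq_dot_unitize[OF T, of Z] in auto)

lemma sig2_pos_of_unit_gram:
  assumes "unit_gram T n d (\<lambda>i. center T (Z i)) U lam" "i < n"
  shows "0 < sig2 T Z i"
proof -
  have "0 < (L2_set (center T (Z i)) {..<T})\<^sup>2" using unit_gram.x_nonzero[OF assms] by simp
  then show ?thesis unfolding L2_set_center_sq by (simp add: zero_less_mult_iff)
qed

lemma gram_perturbation_of_small_noise:
  fixes T n d :: nat and Z E U :: "nat \<Rightarrow> nat \<Rightarrow> real" and \<nu> lam :: "nat \<Rightarrow> real" and K :: real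
  defines "\<gamma> \<equiv> Min ((\<lambda>i. sig2 T Z i / \<nu> i) ` {..<n})"
    and "x \<equiv> \<lambda>i. center T (Z i)"
  assumes gram: "unit_gram T n d x U lam"
    and \<nu>_pos: "\<And>i. i < n \<Longrightarrow> \<nu> i > 0"
    and T: "1 \<le> T" and lnnT: "ln (real n) \<le> 2 * ln (real T)"
    and \<gamma>_large: "ln (real T) / \<gamma> \<le> 1 / 20000"
    and K: "0 \<le> K" "K \<le> 90 * ln (real n)"
    and noise_norm: "\<And>i. i < n \<Longrightarrow> (\<Sum>t<T. (E i t)\<^sup>2) \<le> K * real T * \<nu> i"
    and noise_along_v: "\<And>i j. i < n \<Longrightarrow> j < n \<Longrightarrow>
      (\<Sum>t<T. unitize T (x j) t * E i t)\<^sup>2 \<le> K * \<nu> i"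
    and noise_along_w: "\<And>i a. i < n \<Longrightarrow> a < d \<Longrightarrow>
      (\<Sum>t<T. sing_vec T n x U lam a t * E i t)\<^sup>2 \<le> K * \<nu> i"
  shows "gram_perturbation T n d x U lam (\<lambda>i. center T (E i)) (sqrt (K / (\<gamma> * real T))) (K / \<gamma>)"
proof -
  interpret unit_gram T n d x U lam by (rule gram)
  define \<theta> where "\<theta> = sqrt (K / (\<gamma> * real T))"
  have T0: "0 < T" using T by simp
  have sig_pos: "0 < sig2 T Z i" if "i < n" for i
    using sig2_pos_of_unit_gram gram that unfolding x_def by blast
  have \<gamma>_pos: "0 < \<gamma>" unfolding \<gamma>_def using n_pos sig_pos \<nu>_pos by (subst Min_gr_iff) auto
  have \<nu>_le: "\<nu> i \<le> sig2 T Z i / \<gamma>" if "i < n" for i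
  proof -
    have "\<gamma> \<le> sig2 T Z i / \<nu> i" unfolding \<gamma>_def using that by (intro Min_le) auto
    then show ?thesis using \<nu>_pos[OF that] \<gamma>_pos by (simp add: field_simps)
  qed
  have \<theta>_radius: "0 \<le> \<theta> * L2_set (x i) {..<T}" for i
    unfolding \<theta>_def using K \<gamma>_pos T0 by simp
  have K\<nu>_le: "K * \<nu> i \<le> (\<theta> * L2_set (x i) {..<T})\<^sup>2" if "i < n" for i
    unfolding power_mult_distrib x_def L2_set_center_sq \<theta>_def
    using K \<gamma>_pos T0 mult_left_mono[OF \<nu>_le[OF that] K(1)] by (simp add: field_simps)
  show ?thesis
  proof (unfold_locales, fold \<theta>_def)
    fix i assume i: "i < n"
    have "dot T (center T (E i)) (center T (E i)) \<le> dot T (E i) (E i)" by (rule dot_center_self_le)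
    also have "\<dots> \<le> K * real T * \<nu> i" using noise_norm[OF i] by (simp add: dot_def power2_eq_square)
    also have "\<dots> \<le> K / \<gamma> * (L2_set (x i) {..<T})\<^sup>2"
      unfolding x_def L2_set_center_sq using mult_left_mono[OF \<nu>_le[OF i], of "K * real T"] K by simp
    finally show "dot T (center T (E i)) (center T (E i)) \<le> K / \<gamma> * (L2_set (x i) {..<T})\<^sup>2" .
  next
    fix i j assume i: "i < n" and j: "j < n"
    have "dot T (unitize T (x j)) (center T (E i)) = (\<Sum>t<T. unitize T (x j) t * E i t)"
      unfolding x_def by (subst dot_center_fixed) (auto simp: center_unitize_center dot_def)
    then show "\<bar>dot T (unitize T (x j)) (center T (E i))\<bar> \<le> \<theta> * L2_set (x i) {..<T}"
      using order_trans[OF noise_along_v[OF i j] K\<nu>_le[OF i]] \<theta>_radius[of i]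
      by (simp add: abs_le_square_iff[symmetric])
  next
    fix i a assume i: "i < n" and a: "a < d"
    have "dot T (sing_vec T n x U lam a) (center T (E i)) = (\<Sum>t<T. sing_vec T n x U lam a t * E i t)"
      unfolding x_def by (subst dot_center_fixed) (auto simp: center_sing_vec dot_def)
    then show "\<bar>dot T (sing_vec T n x U lam a) (center T (E i))\<bar> \<le> \<theta> * L2_set (x i) {..<T}"
      using order_trans[OF noise_along_w[OF i a] K\<nu>_le[OF i]] \<theta>_radius[of i]
      by (simp add: abs_le_square_iff[symmetric])
  next
    show "2 * \<theta> + K / \<gamma> \<le> 1 / 2"
      unfolding \<theta>_def using deviation_radii_small[OF \<gamma>_pos _ K lnnT \<gamma>_large] T by simp
  qed (use K \<gamma>_pos in \<open>auto simp: \<theta>_def\<close>)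
qed

lemma corr_perturbation_le_of_small_noise:
  fixes T n d :: nat and Z E U :: "nat \<Rightarrow> nat \<Rightarrow> real" and \<nu> lam :: "nat \<Rightarrow> real" and K :: real
  defines "\<gamma> \<equiv> Min ((\<lambda>i. sig2 T Z i / \<nu> i) ` {..<n})"
    and "x \<equiv> \<lambda>i. center T (Z i)"
  assumes gram: "unit_gram T n d x U lam"
    and \<nu>_pos: "\<And>i. i < n \<Longrightarrow> \<nu> i > 0"
    and T: "1 \<le> T" and lnnT: "ln (real n) \<le> 2 * ln (real T)"
    and \<gamma>_large: "ln (real T) / \<gamma> \<le> 1 / 20000"
    and K: "0 \<le> K" "K \<le> 90 * ln (real n)"
    and noise_norm: "\<And>i. i < n \<Longrightarrow> (\<Sum>t<T. (E i t)\<^sup>2) \<le> K * real T * \<nu> i"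
    and noise_along_v: "\<And>i j. i < n \<Longrightarrow> j < n \<Longrightarrow>
      (\<Sum>t<T. unitize T (x j) t * E i t)\<^sup>2 \<le> K * \<nu> i"
    and noise_along_w: "\<And>i a. i < n \<Longrightarrow> a < d \<Longrightarrow>
      (\<Sum>t<T. sing_vec T n x U lam a t * E i t)\<^sup>2 \<le> K * \<nu> i"
  shows "norm_2inf n d
      (mat_mul n (\<lambda>i j. corr T (\<lambda>i t. Z i t + E i t) i j - corr T Z i j) (\<lambda>i a. U i a / sqrt (lam a)))
    \<le> 3640 * sqrt (real d * ln (real T) / (\<gamma> * lam (d - 1)))
        * (1 + (sqrt (ln (real n) / \<gamma>) + sqrt (1 / real T)) * norm_2inf n n (corr T Z))"
proof -
  interpret gram_perturbation T n d x U lam "\<lambda>i. center T (E i)" "sqrt (K / (\<gamma> * real T))" "K / \<gamma>"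
    using gram_perturbation_of_small_noise[OF gram[unfolded x_def] \<nu>_pos T lnnT \<gamma>_large[unfolded \<gamma>_def] K
        noise_norm noise_along_v[unfolded x_def] noise_along_w[unfolded x_def]]
    unfolding \<gamma>_def x_def .
  have T0: "0 < T" using T by simp
  have \<gamma>_pos: "0 < \<gamma>"
    unfolding \<gamma>_def using n_pos sig2_pos_of_unit_gram[OF gram[unfolded x_def]] \<nu>_pos
    by (subst Min_gr_iff) auto
  have corr_row: "corr T Z i = (\<lambda>l. dot T (v i) (v l))" for i
    unfolding x_def using corr_eq_dot_unitize[OF T0] by blast
  have corr_ZE: "corr T (\<lambda>i t. Z i t + E i t) i j = dot T (vh i) (vh j)" for i j
    unfolding x_def using corr_eq_dot_unitize[OF T0, of "\<lambda>i t. Z i t + E i t"] by (simp add: center_add)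
  define \<rho> where "\<rho> = norm_2inf n n (corr T Z)"
  interpret C: rate_calibration "real n" "real d" "lam (d - 1)" \<gamma> "real T" "ln (real T)" "ln (real n)" K 90 \<rho>
  proof unfold_locales
    show "real n \<le> real d * \<rho>\<^sup>2"
      unfolding \<rho>_def corr_row using dim_le_dim_mult_norm_2inf_sq by simp
  qed (use d_pos lam_min_pos \<gamma>_pos T n_pos lnnT K dim_mult_lam_min_le norm_2inf_nonneg in \<open>auto simp: \<rho>_def\<close>)
  have "L2_set (mat_mul n (\<lambda>i j. corr T (\<lambda>i t. Z i t + E i t) i j - corr T Z i j)
                 (\<lambda>i a. U i a / sqrt (lam a)) i) {..<d}
        \<le> 3640 * sqrt (real d * ln (real T) / (\<gamma> * lam (d - 1)))
           * (1 + (sqrt (ln (real n) / \<gamma>) + sqrt (1 / real T)) * \<rho>)" if i: "i < n" for i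
  proof -
    have "L2_set (\<lambda>l. dot T (v i) (v l)) {..<n} \<le> \<rho>"
      using L2_set_row_le_norm_2inf[OF i, of "corr T Z" n] unfolding \<rho>_def corr_row .
    note rate = C.deterministic_bound_le_rate[OF L2_set_nonneg this, unfolded C.\<theta>_def C.\<eta>_def]
    show ?thesis
      using order_trans[OF row_bound[OF i] rate] unfolding mat_mul_def corr_ZE corr_row by simp
  qed
  moreover have "0 \<le> 3640 * sqrt (real d * ln (real T) / (\<gamma> * lam (d - 1)))
           * (1 + (sqrt (ln (real n) / \<gamma>) + sqrt (1 / real T)) * \<rho>)"
    using lam_min_pos \<gamma>_pos T n_pos C.\<rho>_nonneg by (intro mult_nonneg_nonneg add_nonneg_nonneg) auto
  ultimately show ?thesis unfolding \<rho>_def by (intro norm_2inf_le)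
qed

lemma borel_measurable_corr:
  assumes "\<And>i t. i \<in> I \<Longrightarrow> t < T \<Longrightarrow> (\<lambda>\<omega>. Z \<omega> i t) \<in> borel_measurable M" "i \<in> I" "j \<in> I"
  shows "(\<lambda>\<omega>. corr T (Z \<omega>) i j) \<in> borel_measurable M"
  unfolding corr_def sig2_def using assms
  by (intro borel_measurable_divide borel_measurable_times borel_measurable_const borel_measurable_sum
      borel_measurable_power borel_measurable_sqrt[THEN measurable_compose[rotated]]) auto

lemma borel_measurable_norm_2inf:
  assumes "\<And>i j. i < n \<Longrightarrow> j < m \<Longrightarrow> (\<lambda>\<omega>. B \<omega> i j) \<in> borel_measurable M"
  shows "(\<lambda>\<omega>. norm_2inf n m (B \<omega>)) \<in> borel_measurable M"
proof -
  define h where "h i \<omega> = (if i < n then sqrt (\<Sum>j<m. (B \<omega> i j)\<^sup>2) else 0)" for i \<omega>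
  have "insert 0 ((\<lambda>i. sqrt (\<Sum>j<m. (B \<omega> i j)\<^sup>2)) ` {..<n}) = (\<lambda>i. h i \<omega>) ` {..n}" for \<omega>
    unfolding h_def by (auto simp: image_iff intro: bexI[of _ n])
  then have "norm_2inf n m (B \<omega>) = Max ((\<lambda>i. h i \<omega>) ` {..n})" for \<omega>
    unfolding norm_2inf_def by simp
  moreover have "h i \<in> borel_measurable M" for i
    unfolding h_def using assms
    by (cases "i < n") (auto intro!: borel_measurable_sum borel_measurable_power
        borel_measurable_sqrt[THEN measurable_compose[rotated]])
  then have "(\<lambda>\<omega>. Max ((\<lambda>i. h i \<omega>) ` {..n})) \<in> borel_measurable M"
    by (intro borel_measurable_Max) auto
  ultimately show ?thesis by simp
qed

lemma borel_measurable_norm_corr_diff: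
  assumes "\<And>i t. i < n \<Longrightarrow> t < T \<Longrightarrow> (\<lambda>\<omega>. N \<omega> i t) \<in> borel_measurable M"
  shows "(\<lambda>\<omega>. norm_2inf n d (mat_mul n (\<lambda>i j. corr T (\<lambda>i t. Z i t + N \<omega> i t) i j - corr T Z i j) B))
    \<in> borel_measurable M"
proof -
  have "(\<lambda>\<omega>. corr T (\<lambda>i t. Z i t + N \<omega> i t) i j) \<in> borel_measurable M" if "i < n" "j < n" for i j
    using assms that by (intro borel_measurable_corr[where I = "{..<n}"]) auto
  then show ?thesis
    unfolding mat_mul_def
    by (intro borel_measurable_norm_2inf borel_measurable_sum borel_measurable_times
        borel_measurable_diff borel_measurable_const) auto
qed

lemma sets_Collect_borel_le: "(f :: _ \<Rightarrow> real) \<in> borel_measurable M \<Longrightarrow> {x \<in> space M. f x \<le> c} \<in> sets M"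
  by measurable

lemma prob_corr_perturbation_le:
  fixes T n d :: nat and Z U :: "nat \<Rightarrow> nat \<Rightarrow> real" and M :: "'a measure"
    and N :: "'a \<Rightarrow> nat \<Rightarrow> nat \<Rightarrow> real" and \<nu> lam :: "nat \<Rightarrow> real" and cl :: real
  defines "\<gamma> \<equiv> Min ((\<lambda>i. sig2 T Z i / \<nu> i) ` {..<n})"
  assumes sig_pos: "\<And>i. i < n \<Longrightarrow> sig2 T Z i > 0"
    and lam_sorted: "\<And>a b. a \<le> b \<Longrightarrow> b < d \<Longrightarrow> lam b \<le> lam a"
    and lam_pos: "\<And>a. a < d \<Longrightarrow> lam a > 0"
    and U_orth: "\<And>a b. a < d \<Longrightarrow> b < d \<Longrightarrow> (\<Sum>i<n. U i a * U i b) = (if a = b then 1 else 0)"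
    and R_eig: "\<And>i j. i < n \<Longrightarrow> j < n \<Longrightarrow> corr T Z i j = (\<Sum>a<d. U i a * lam a * U j a)"
    and prob: "prob_space M"
    and \<nu>_pos: "\<And>i. i < n \<Longrightarrow> \<nu> i > 0"
    and subg: "\<And>i. i < n \<Longrightarrow> subgaussian_row M T (\<lambda>\<omega> t. N \<omega> i t) (\<nu> i)"
    and n: "2 \<le> n" and T: "1 \<le> T" and cl: "0 < cl" "cl \<le> lam (d - 1)"
    and lnnT: "ln (real n) \<le> 2 * ln (real T)"
    and \<kappa>_small: "lam 0 / lam (d - 1) * ln (real T) / \<gamma> \<le> 1 / 20000"
  shows "1 - 2 * (2 + 1 / cl) / real n \<le> measure M {\<omega> \<in> space M.
        norm_2inf n d (mat_mul n (\<lambda>i j. corr T (\<lambda>i t. Z i t + N \<omega> i t) i j - corr T Z i j)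
          (\<lambda>i a. U i a / sqrt (lam a)))
        \<le> 3640 * sqrt (real d * ln (real T) / (\<gamma> * lam (d - 1)))
            * (1 + (sqrt (ln (real n) / \<gamma>) + sqrt (1 / real T)) * norm_2inf n n (corr T Z))}"
    (is "_ \<le> measure M ?Good")
proof -
  interpret prob_space M by (rule prob)
  define x where "x = (\<lambda>i. center T (Z i))"
  define V where "V = (\<lambda>j. unitize T (x j)) ` {..<n} \<union> sing_vec T n x U lam ` {..<d}"
  define p where "p = nat \<lceil>3 * ln (real n)\<rceil>"
  define K where "K = 2 * exp 2 * real p"
  note p = deviation_level_bounds[OF n, folded p_def]
  have T0: "0 < T" using T by simp
  have gram: "unit_gram T n d x U lam"
    unfolding x_def using n by (intro unit_gram_centered[OF T0 _ sig_pos lam_sorted lam_pos U_orth R_eig]) auto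
  interpret unit_gram T n d x U lam by (rule gram)
  have "0 < \<gamma>" unfolding \<gamma>_def using n sig_pos \<nu>_pos by (subst Min_gr_iff) (auto simp: lessThan_empty_iff)
  then have "ln (real T) / \<gamma> \<le> lam 0 / lam (d - 1) * ln (real T) / \<gamma>"
    using T mult_right_mono[OF lam_max_div_min_ge_1, of "ln (real T)"] by (intro divide_right_mono) auto
  then have \<gamma>_large: "ln (real T) / \<gamma> \<le> 1 / 20000" using \<kappa>_small by linarith
  have V_unit: "(\<Sum>t<T. (u t)\<^sup>2) = 1" if "u \<in> V" for u
    using that v_unit sing_vec_unit unfolding V_def by (auto simp: dot_def power2_eq_square)
  have card_V: "card V \<le> n + d"
    unfolding V_def using card_Un_le card_image_le[of "{..<n}"] card_image_le[of "{..<d}"]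
    by (metis add_mono card_lessThan finite_lessThan order_trans)
  define Bad where "Bad = {\<omega> \<in> space M. \<exists>i<n. K * real T * \<nu> i \<le> (\<Sum>t<T. (N \<omega> i t)\<^sup>2) \<or>
                                          (\<exists>u\<in>V. K * \<nu> i \<le> (\<Sum>t<T. u t * N \<omega> i t)\<^sup>2)}"
  have V_finite: "finite V" unfolding V_def by simp
  note Bad = noise_deviation_event[where n = n and \<nu> = \<nu> and N = N, OF prob T0 p(1) V_finite V_unit \<nu>_pos subg, folded K_def, folded Bad_def]
  have "space M - Bad \<subseteq> ?Good"
  proof
    fix \<omega> assume \<omega>: "\<omega> \<in> space M - Bad"
    then have "norm_2inf n d (mat_mul n (\<lambda>i j. corr T (\<lambda>i t. Z i t + N \<omega> i t) i j - corr T Z i j)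
          (\<lambda>i a. U i a / sqrt (lam a)))
        \<le> 3640 * sqrt (real d * ln (real T) / (\<gamma> * lam (d - 1)))
            * (1 + (sqrt (ln (real n) / \<gamma>) + sqrt (1 / real T)) * norm_2inf n n (corr T Z))"
      unfolding \<gamma>_def
      by (intro corr_perturbation_le_of_small_noise[OF gram[unfolded x_def] \<nu>_pos T lnnT
          \<gamma>_large[unfolded \<gamma>_def], of K])
        (use p K_def in \<open>auto simp: Bad_def V_def x_def not_le less_imp_le\<close>)
    then show "\<omega> \<in> ?Good" using \<omega> by simp
  qed
  moreover have "?Good \<in> sets M"
    using subgaussian_row_coord[OF subg] unfolding subgaussian_def
    by (intro sets_Collect_borel_le borel_measurable_norm_corr_diff) auto
  ultimately have "measure M (space M - Bad) \<le> measure M ?Good" by (rule finite_measure_mono)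
  then have "1 - measure M Bad \<le> measure M ?Good" using prob_compl[OF Bad(1)] by linarith
  moreover have "measure M Bad \<le> 2 * (2 + 1 / cl) / real n"
  proof -
    have "real d * cl \<le> real d * lam (d - 1)" using cl(2) by (simp add: mult_left_mono)
    then have "real d * cl \<le> real n" using dim_mult_lam_min_le by linarith
    have "measure M Bad \<le> 2 * exp (- real p) * (real n * (1 + real (card V)))"
      using Bad(2) V_def by simp
    also have "\<dots> \<le> 2 * exp (- real p) * (real n * (1 + (real n + real d)))"
      using card_V by (intro mult_left_mono) auto
    also have "\<dots> \<le> 2 * (2 + 1 / cl) / real n"
      using failure_probability_le[OF n cl(1) \<open>real d * cl \<le> real n\<close> p(3)] .
    finally show ?thesis .
  qed
  ultimately show ?thesis by linarith
qed

lemma eventually_ln_le_twice_ln: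
  fixes n T :: "nat \<Rightarrow> nat"
  assumes "(\<lambda>k. real (n k)) \<in> O(\<lambda>k. real (T k))" and "filterlim T at_top sequentially"
  shows "eventually (\<lambda>k. ln (real (n k)) \<le> 2 * ln (real (T k))) sequentially"
proof -
  obtain c where c: "c > 0" "eventually (\<lambda>k. norm (real (n k)) \<le> c * norm (real (T k))) sequentially"
    using assms(1) by (elim landau_o.bigE) blast
  have "filterlim (\<lambda>k. real (T k)) at_top sequentially"
    using filterlim_compose[OF filterlim_real_sequentially assms(2)] .
  then have "eventually (\<lambda>k. max c 1 \<le> real (T k)) sequentially"
    unfolding filterlim_at_top by blast
  with c(2) show ?thesis
  proof eventually_elim
    case (elim k)
    show ?case
    proof (cases "n k = 0")
      case False
      then have "ln (real (n k)) \<le> ln (c * real (T k))" using elim c(1) by simp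
      also have "\<dots> = ln c + ln (real (T k))" using elim c(1) by (simp add: ln_mult)
      also have "ln c \<le> ln (real (T k))" using elim c(1) by simp
      finally show ?thesis by simp
    qed (use elim in simp)
  qed
qed

lemma tendsto_one_minus_div:
  fixes n :: "nat \<Rightarrow> nat"
  assumes "filterlim n at_top sequentially"
  shows "(\<lambda>k. 1 - c / real (n k)) \<longlonglongrightarrow> 1"
proof -
  have "(\<lambda>k. c / real (n k)) \<longlonglongrightarrow> 0"
    using filterlim_compose[OF filterlim_real_sequentially assms]
    by (intro tendsto_divide_0[OF tendsto_const] filterlim_at_top_imp_at_infinity)
  then show ?thesis using tendsto_diff[OF tendsto_const[of 1]] by fastforce
qed

theorem mainTheorem16:
  fixes n T d :: "nat \<Rightarrow> nat"
    and Zstar :: "nat \<Rightarrow> nat \<Rightarrow> nat \<Rightarrow> real"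
    and M :: "nat \<Rightarrow> 'a measure"
    and N :: "nat \<Rightarrow> 'a \<Rightarrow> nat \<Rightarrow> nat \<Rightarrow> real"
    and \<nu> :: "nat \<Rightarrow> nat \<Rightarrow> real"
    and lam :: "nat \<Rightarrow> nat \<Rightarrow> real"
    and U :: "nat \<Rightarrow> nat \<Rightarrow> nat \<Rightarrow> real"
  defines "Rstar \<equiv> \<lambda>k. corr (T k) (Zstar k)"
    and "R \<equiv> \<lambda>k \<omega>. corr (T k) (\<lambda>i t. Zstar k i t + N k \<omega> i t)"
    and "\<gamma> \<equiv> \<lambda>k. Min ((\<lambda>i. sig2 (T k) (Zstar k) i / \<nu> k i) ` {..<n k})"
    and "\<kappa> \<equiv> \<lambda>k. lam k 0 / lam k (d k - 1)"
  assumes n_lim: "filterlim n at_top sequentially"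
    and T_lim: "filterlim T at_top sequentially"
    \<comment> \<open>signal powers positive\<close>
    and sig_pos: "\<And>k i. i < n k \<Longrightarrow> sig2 (T k) (Zstar k) i > 0"
    \<comment> \<open>spectral decomposition of R*: d = rank, lam = nonzero eigenvalues, U orthonormal\<close>
    and lam_sorted: "\<And>k a b. a \<le> b \<Longrightarrow> b < d k \<Longrightarrow> lam k b \<le> lam k a"
    and lam_pos: "\<And>k a. a < d k \<Longrightarrow> lam k a > 0"
    and U_orth: "\<And>k a b. a < d k \<Longrightarrow> b < d k \<Longrightarrow>
                   (\<Sum>i<n k. U k i a * U k i b) = (if a = b then 1 else 0)"
    and R_eig: "\<And>k i j. i < n k \<Longrightarrow> j < n k \<Longrightarrow>
                   Rstar k i j = (\<Sum>a<d k. U k i a * lam k a * U k j a)"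
    \<comment> \<open>Assumption 1\<close>
    and prob: "\<And>k. prob_space (M k)"
    and indep: "\<And>k. prob_space.indep_vars (M k) (\<lambda>i. PiM {..<T k} (\<lambda>_. borel))
                      (\<lambda>i \<omega>. restrict (\<lambda>t. N k \<omega> i t) {..<T k}) {..<n k}"
    and mean_zero: "\<And>k i t. i < n k \<Longrightarrow> t < T k \<Longrightarrow>
                      integrable (M k) (\<lambda>\<omega>. N k \<omega> i t) \<and> (\<integral>\<omega>. N k \<omega> i t \<partial>M k) = 0"
    and nu_pos: "\<And>k i. i < n k \<Longrightarrow> \<nu> k i > 0"
    and subg: "\<And>k i. i < n k \<Longrightarrow> subgaussian_row (M k) (T k) (\<lambda>\<omega> t. N k \<omega> i t) (\<nu> k i)"
    and n_OT: "(\<lambda>k. real (n k)) \<in> O(\<lambda>k. real (T k))"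
    \<comment> \<open>Assumption 2\<close>
    and lam_bdd: "\<exists>c>0. eventually (\<lambda>k. lam k (d k - 1) \<ge> c) sequentially"
    and kappa_oT: "\<kappa> \<in> o(\<lambda>k. real (T k))"
    and kappa_gamma: "(\<lambda>k. \<kappa> k * ln (real (T k)) / \<gamma> k) \<longlonglongrightarrow> 0"
  shows "\<exists>C>0. (\<lambda>k. prob_space.prob (M k)
     {\<omega> \<in> space (M k).
        norm_2inf (n k) (d k)
          (mat_mul (n k) (\<lambda>i j. R k \<omega> i j - Rstar k i j) (\<lambda>i a. U k i a / sqrt (lam k a)))
        \<le> C * sqrt (real (d k) * ln (real (T k)) / (\<gamma> k * lam k (d k - 1)))
            * (1 + (sqrt (ln (real (n k)) / \<gamma> k) + sqrt (1 / real (T k)))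
                   * norm_2inf (n k) (n k) (Rstar k))}) \<longlonglongrightarrow> 1"
proof -
  define event where "event C k = {\<omega> \<in> space (M k).
        norm_2inf (n k) (d k)
          (mat_mul (n k) (\<lambda>i j. R k \<omega> i j - Rstar k i j) (\<lambda>i a. U k i a / sqrt (lam k a)))
        \<le> C * sqrt (real (d k) * ln (real (T k)) / (\<gamma> k * lam k (d k - 1)))
            * (1 + (sqrt (ln (real (n k)) / \<gamma> k) + sqrt (1 / real (T k)))
                   * norm_2inf (n k) (n k) (Rstar k))}" for C k
  obtain cl where cl: "cl > 0" "eventually (\<lambda>k. cl \<le> lam k (d k - 1)) sequentially"
    using lam_bdd by blast
  have \<kappa>_small: "eventually (\<lambda>k. \<kappa> k * ln (real (T k)) / \<gamma> k < 1 / 20000) sequentially"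
    by (rule order_tendstoD(2)[OF kappa_gamma]) simp
  have "eventually (\<lambda>k. 1 - 2 * (2 + 1 / cl) / real (n k) \<le> prob_space.prob (M k) (event 3640 k)) sequentially"
    using cl(2) eventually_ln_le_twice_ln[OF n_OT T_lim] \<kappa>_small
      n_lim[unfolded filterlim_at_top, rule_format, of 2] T_lim[unfolded filterlim_at_top, rule_format, of 1]
  proof eventually_elim
    case (elim k)
    show ?case
      unfolding event_def R_def Rstar_def \<gamma>_def
      by (rule prob_corr_perturbation_le[where M = "M k" and N = "N k" and \<nu> = "\<nu> k"])
        (use sig_pos lam_sorted lam_pos U_orth R_eig prob nu_pos subg elim cl(1)
          in \<open>auto simp: Rstar_def \<gamma>_def \<kappa>_def less_imp_le\<close>)
  qed
  moreover have "eventually (\<lambda>k. prob_space.prob (M k) (event 3640 k) \<le> 1) sequentially"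
    by (simp add: prob_space.prob_le_1[OF prob])
  moreover have "(\<lambda>k. 1 - 2 * (2 + 1 / cl) / real (n k)) \<longlonglongrightarrow> 1"
    by (rule tendsto_one_minus_div[OF n_lim])
  ultimately have "(\<lambda>k. prob_space.prob (M k) (event 3640 k)) \<longlonglongrightarrow> 1"
    using tendsto_const by (rule tendsto_sandwich)
  then show ?thesis unfolding event_def by (intro exI[of _ 3640]) simp
qed

end
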